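(* (Outer bound under full secrecy for arbitrary channels.) For an arbitrary (not necessarily degraded) secure ISAC channel with action-dependent states $P_{S_1S_2|A}$, $P_{Y_1Y_2|S_1S_2X}$, every tuple $(R,D_1,D_2)\in\mathcal R_{\mathrm{Act}}$ satisfies: there exists a pmf $P_{AX}$ such that, under $P_{AXY_1Y_2S_1S_2}=P_{AX}P_{S_1S_2|A}P_{Y_1Y_2|S_1S_2X}$, $$R\le\min\{H(Y_1,S_1|Y_2,S_2)-H(S_1|Y_1,Y_2,S_2,X,A),\ I(X,A;Y_1,S_1)\}$$ and $D_j\ge\mathbb E[d_j(S_j,\mathsf{Est}_j(A,X,Y_1,Y_2))]$ for $j=1,2$, where $\mathsf{Est}_j(a,x,y_1,y_2)\in\operatorname{argmin}_{\tilde s\in\widehat{\mathcal S}_j}\sum_{s_j}P_{S_j|AXY_1Y_2}(s_j|a,x,y_1,y_2)d_j(s_j,\tilde s)$.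
   Context: Model (secure ISAC with transmitter actions and perfect output feedback). Fix finite sets $\mathcal A,\mathcal X,\mathcal S_1,\mathcal S_2,\mathcal Y_1,\mathcal Y_2,\widehat{\mathcal S}_1,\widehat{\mathcal S}_2$, a conditional pmf $P_{S_1S_2|A}$ (action-dependent states) and a memoryless channel $P_{Y_1Y_2|S_1S_2X}$. Let $d_j:\mathcal S_j\times\widehat{\mathcal S}_j\to[0,\infty)$, $j=1,2$, be bounded distortion functions, extended to sequences by $d_j(s^n,\hat s^n)=\frac1n\sum_{i=1}^n d_j(s_i,\hat s_i)$. A full-secrecy code of blocklength $n$ consists of: a finite message set $\mathcal M$, with message $M$ uniform on $\mathcal M$; an action encoder that, for $i=1,\dots,n$, outputs $A_i\in\mathcal A$ as a (possibly randomized) function of $(M,Z^{i-1})$; a channel encoder that outputs $X_i\in\mathcal X$ as a (possibly randomized) function of $(M,A_i,Z^{i-1})$, where $Z_i=(Y_{1,i},Y_{2,i})$ is perfect strictly causal output feedback; at each time $i$, given $(A_i,X_i)$ and all past variables, $(S_{1,i},S_{2,i})\sim P_{S_1S_2|A}(\cdot|A_i)$ and then $(Y_{1,i},Y_{2,i})\sim P_{Y_1Y_2|S_1S_2X}(\cdot|S_{1,i},S_{2,i},X_i)$; a decoder $\widehat M=\mathsf{Dec}(Y_1^n,S_1^n)$; and state estimators $\widehat{S}_j^n=\mathsf{Est}_j(X^n,A^n,Y_1^n,Y_2^n)$, $j=1,2$. The eavesdropper observes $(Y_2^n,S_2^n)$. Full secrecy: a tuple $(R,D_1,D_2)$ is achievable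 if for every $\delta>0$ there exist $n\ge1$ and a code with $\frac1n\log|\mathcal M|\ge R-\delta$, $\Pr[M\ne\widehat M]\le\delta$, $I(M;Y_2^n,S_2^n)\le\delta$, and $\mathbb E[d_j(S_j^n,\widehat S_j^n)]\le D_j+\delta$ ($j=1,2$). $\mathcal R_{\mathrm{Act}}$ is the closure of the set of achievable tuples. *)

theory Defs
  imports "HOL-Probability.Probability"
begin

definition ent :: "'a pmf \<Rightarrow> real" where
  "ent p = - (\<Sum>v\<in>set_pmf p. pmf p v * log 2 (pmf p v))"

definition cent :: "('u \<times> 'v) pmf \<Rightarrow> real" where
  "cent p = ent p - ent (map_pmf snd p)"

definition minf :: "('u \<times> 'v) pmf \<Rightarrow> real" where
  "minf p = ent (map_pmf fst p) + ent (map_pmf snd p) - ent p"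

text \<open>Conditional pmf P(v|u) from a joint pmf of (U,V) (equal to 0 where P(u)=0).\<close>
definition cpmf :: "('u \<times> 'v) pmf \<Rightarrow> 'u \<Rightarrow> 'v \<Rightarrow> real" where
  "cpmf q u v = pmf q (u, v) / pmf (map_pmf fst q) u"

definition bayes_est :: "('u \<times> 'v::finite) pmf \<Rightarrow> ('v \<Rightarrow> 'e \<Rightarrow> real) \<Rightarrow> ('u \<Rightarrow> 'e) \<Rightarrow> bool" where
  "bayes_est q d e \<longleftrightarrow> (\<forall>u t. (\<Sum>v\<in>UNIV. cpmf q u v * d v (e u)) \<le> (\<Sum>v\<in>UNIV. cpmf q u v * d v t))"

datatype ('a,'x,'s1,'s2,'y1,'y2) sym =
  Sym (sA: 'a) (sX: 'x) (sS1: 's1) (sS2: 's2) (sY1: 'y1) (sY2: 'y2)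

definition joint1 ::
  "('a \<Rightarrow> ('s1 \<times> 's2) pmf) \<Rightarrow> ('s1 \<Rightarrow> 's2 \<Rightarrow> 'x \<Rightarrow> ('y1 \<times> 'y2) pmf) \<Rightarrow> ('a \<times> 'x) pmf
    \<Rightarrow> ('a,'x,'s1,'s2,'y1,'y2) sym pmf" where
  "joint1 PS W P = do { ax \<leftarrow> P; s \<leftarrow> PS (fst ax); y \<leftarrow> W (fst s) (snd s) (snd ax);
       return_pmf (Sym (fst ax) (snd ax) (fst s) (snd s) (fst y) (snd y)) }"

text \<open>A code: message count K (message uniform on {..<K}); private encoder randomness
  T ~ PT (independent of M, shared over time by both encoders);
  action encoder A_i = f M Z^{i-1} T; channel encoder X_i = g M A_i Z^{i-1} T;
  decoder dec Y1^n S1^n; estimators Shat_{j,i} = est_j i X^n A^n Y1^n Y2^n.\<close>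

definition traj_step ::
  "('a \<Rightarrow> ('s1 \<times> 's2) pmf) \<Rightarrow> ('s1 \<Rightarrow> 's2 \<Rightarrow> 'x \<Rightarrow> ('y1 \<times> 'y2) pmf)
   \<Rightarrow> (nat \<Rightarrow> ('y1 \<times> 'y2) list \<Rightarrow> nat \<Rightarrow> 'a)
   \<Rightarrow> (nat \<Rightarrow> 'a \<Rightarrow> ('y1 \<times> 'y2) list \<Rightarrow> nat \<Rightarrow> 'x)
   \<Rightarrow> nat \<Rightarrow> nat \<Rightarrow> ('a,'x,'s1,'s2,'y1,'y2) sym list \<Rightarrow> ('a,'x,'s1,'s2,'y1,'y2) sym list pmf" where
  "traj_step PS W f g m tk h =
     (let zs = map (\<lambda>c. (sY1 c, sY2 c)) h; a = f m zs tk; x = g m a zs tk in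
      do { s \<leftarrow> PS a; y \<leftarrow> W (fst s) (snd s) x;
           return_pmf (h @ [Sym a x (fst s) (snd s) (fst y) (snd y)]) })"

primrec traj ::
  "('a \<Rightarrow> ('s1 \<times> 's2) pmf) \<Rightarrow> ('s1 \<Rightarrow> 's2 \<Rightarrow> 'x \<Rightarrow> ('y1 \<times> 'y2) pmf)
   \<Rightarrow> (nat \<Rightarrow> ('y1 \<times> 'y2) list \<Rightarrow> nat \<Rightarrow> 'a)
   \<Rightarrow> (nat \<Rightarrow> 'a \<Rightarrow> ('y1 \<times> 'y2) list \<Rightarrow> nat \<Rightarrow> 'x)
   \<Rightarrow> nat \<Rightarrow> nat \<Rightarrow> nat \<Rightarrow> ('a,'x,'s1,'s2,'y1,'y2) sym list pmf" where
  "traj PS W f g m tk 0 = return_pmf []"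
| "traj PS W f g m tk (Suc n) = bind_pmf (traj PS W f g m tk n) (traj_step PS W f g m tk)"

definition code_dist ::
  "('a \<Rightarrow> ('s1 \<times> 's2) pmf) \<Rightarrow> ('s1 \<Rightarrow> 's2 \<Rightarrow> 'x \<Rightarrow> ('y1 \<times> 'y2) pmf) \<Rightarrow> nat \<Rightarrow> nat \<Rightarrow> nat pmf
   \<Rightarrow> (nat \<Rightarrow> ('y1 \<times> 'y2) list \<Rightarrow> nat \<Rightarrow> 'a)
   \<Rightarrow> (nat \<Rightarrow> 'a \<Rightarrow> ('y1 \<times> 'y2) list \<Rightarrow> nat \<Rightarrow> 'x)
   \<Rightarrow> (nat \<times> nat \<times> ('a,'x,'s1,'s2,'y1,'y2) sym list) pmf" where
  "code_dist PS W n K PT f g = do { m \<leftarrow> pmf_of_set {..<K}; tk \<leftarrow> PT;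
       h \<leftarrow> traj PS W f g m tk n; return_pmf (m, tk, h) }"

definition seq_dist :: "nat \<Rightarrow> ('s \<Rightarrow> 'e \<Rightarrow> real) \<Rightarrow> (nat \<Rightarrow> 's) \<Rightarrow> (nat \<Rightarrow> 'e) \<Rightarrow> real" where
  "seq_dist n d s e = (1 / real n) * (\<Sum>i<n. d (s i) (e i))"

definition achievable ::
  "('a \<Rightarrow> ('s1 \<times> 's2) pmf) \<Rightarrow> ('s1 \<Rightarrow> 's2 \<Rightarrow> 'x \<Rightarrow> ('y1 \<times> 'y2) pmf)
   \<Rightarrow> ('s1 \<Rightarrow> 'e1 \<Rightarrow> real) \<Rightarrow> ('s2 \<Rightarrow> 'e2 \<Rightarrow> real) \<Rightarrow> real \<times> real \<times> real \<Rightarrow> bool" where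
  "achievable PS W d1 d2 RD \<longleftrightarrow> (case RD of (R, D1, D2) \<Rightarrow>
     (\<forall>\<delta>>0. \<exists>n K PT f g dec
        (est1 :: nat \<Rightarrow> 'x list \<Rightarrow> 'a list \<Rightarrow> 'y1 list \<Rightarrow> 'y2 list \<Rightarrow> 'e1)
        (est2 :: nat \<Rightarrow> 'x list \<Rightarrow> 'a list \<Rightarrow> 'y1 list \<Rightarrow> 'y2 list \<Rightarrow> 'e2).
        let P = code_dist PS W n K PT f g in
        n \<ge> 1 \<and> K \<ge> 1 \<and>
        log 2 (real K) / real n \<ge> R - \<delta> \<and>
        measure_pmf.prob P {(m, tk, h). dec (map sY1 h) (map sS1 h) \<noteq> m} \<le> \<delta> \<and>
        minf (map_pmf (\<lambda>(m, tk, h). (m, (map sY2 h, map sS2 h))) P) \<le> \<delta> \<and>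
        measure_pmf.expectation P (\<lambda>(m, tk, h). seq_dist n d1 (\<lambda>i. sS1 (h ! i))
            (\<lambda>i. est1 i (map sX h) (map sA h) (map sY1 h) (map sY2 h))) \<le> D1 + \<delta> \<and>
        measure_pmf.expectation P (\<lambda>(m, tk, h). seq_dist n d2 (\<lambda>i. sS2 (h ! i))
            (\<lambda>i. est2 i (map sX h) (map sA h) (map sY1 h) (map sY2 h))) \<le> D2 + \<delta>))"

definition R_Act ::
  "('a \<Rightarrow> ('s1 \<times> 's2) pmf) \<Rightarrow> ('s1 \<Rightarrow> 's2 \<Rightarrow> 'x \<Rightarrow> ('y1 \<times> 'y2) pmf)
   \<Rightarrow> ('s1 \<Rightarrow> 'e1 \<Rightarrow> real) \<Rightarrow> ('s2 \<Rightarrow> 'e2 \<Rightarrow> real) \<Rightarrow> (real \<times> real \<times> real) set" where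
  "R_Act PS W d1 d2 = closure {RD. achievable PS W d1 d2 RD}"

end

theory Submission
  imports Defs "HOL-Real_Asymp.Real_Asymp"
begin

text \<open>
  Conditioned on the past of the transmission, the i-th letter is produced by the
  single-letter law P_AX P_S1S2|A P_Y1Y2|S1S2X with P_AX the law of (A_i, X_i); and given its own
  (A_i, X_i, Y1_i, Y2_i), the state pair (S1_i, S2_i) is independent of all other letters, because
  actions and inputs see the past only through the output feedback. Fano's inequality and the
  chain rule then bound log K, up to the error and leakage terms, by the sum over letters of the
  two single-letter rate expressions, and each letter's Bayes risk lower-bounds the expected
  distortion of any estimator at that position. Time sharing with a uniform index turns the sums
  into one single-letter law, since the rate expressions are concave and the Bayes risk is linear
  in the mixture. Finally, for a sequence of codes approaching the given tuple, the probability
  simplex on the finite input alphabet is compact and all single-letter quantities are continuous,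
  so a limit point of the time-shared input laws satisfies the bounds exactly.
\<close>

section \<open>Entropy of finitely supported distributions\<close>

lemma log2_zero [simp]: "log 2 (0::real) = 0"
  by (simp add: log_def)

lemma prob_finite_support:
  assumes "finite (set_pmf Q)"
  shows "measure_pmf.prob Q A = sum (pmf Q) (A \<inter> set_pmf Q)"
proof -
  have "measure_pmf.prob Q A = measure_pmf.prob Q (A \<inter> set_pmf Q)"
    by (simp add: measure_Int_set_pmf)
  then show ?thesis
    using assms by (simp add: measure_measure_pmf_finite)
qed

lemma pmf_map_finite_support:
  assumes "finite (set_pmf Q)"
  shows "pmf (map_pmf f Q) v = sum (pmf Q) {w\<in>set_pmf Q. f w = v}"
proof -
  have "pmf (map_pmf f Q) v = measure_pmf.prob Q (f -` {v})"
    by (simp add: pmf_map)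
  also have "\<dots> = sum (pmf Q) (f -` {v} \<inter> set_pmf Q)"
    using assms by (rule prob_finite_support)
  also have "f -` {v} \<inter> set_pmf Q = {w\<in>set_pmf Q. f w = v}"
    by auto
  finally show ?thesis .
qed

lemma expectation_finite_support:
  assumes "finite (set_pmf M)"
  shows "measure_pmf.expectation M f = (\<Sum>x\<in>set_pmf M. pmf M x * f x)"
  using assms by (subst integral_measure_pmf_real[where A="set_pmf M"]) (auto simp: mult.commute)

lemma expectation_finite_type:
  fixes f :: "'c::finite \<Rightarrow> real"
  shows "measure_pmf.expectation M f = (\<Sum>c\<in>UNIV. pmf M c * f c)"
  by (subst integral_measure_pmf_real[where A=UNIV]) (auto simp: mult.commute)

lemma sum_pmf_finite_type:
  fixes k :: "'s::finite pmf"
  shows "(\<Sum>s\<in>set_pmf k. pmf k s * f s) = (\<Sum>s\<in>UNIV. pmf k s * f s)"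
  by (intro sum.mono_neutral_left) (auto simp: set_pmf_eq)

lemma ent_finite_type: "ent (p :: 'v::finite pmf) = - (\<Sum>v\<in>UNIV. pmf p v * log 2 (pmf p v))"
  unfolding ent_def by (simp add: sum_pmf_finite_type)

lemma sum_pmf_group_by:
  assumes fin: "finite (set_pmf Q)"
  shows "(\<Sum>w\<in>set_pmf Q. pmf Q w * G (F w)) = (\<Sum>t\<in>F ` set_pmf Q. pmf (map_pmf F Q) t * G t)"
proof -
  have "(\<Sum>w\<in>set_pmf Q. pmf Q w * G (F w))
      = (\<Sum>t\<in>F ` set_pmf Q. \<Sum>w\<in>{w\<in>set_pmf Q. F w = t}. pmf Q w * G (F w))"
    using fin by (intro sum.group[symmetric]) auto
  also have "\<dots> = (\<Sum>t\<in>F ` set_pmf Q. pmf (map_pmf F Q) t * G t)"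
    using fin by (auto simp: pmf_map_finite_support sum_distrib_right intro!: sum.cong)
  finally show ?thesis .
qed

lemma ent_map_pmf_expectation:
  assumes "finite (set_pmf Q)"
  shows "ent (map_pmf f Q) = - (\<Sum>w\<in>set_pmf Q. pmf Q w * log 2 (pmf (map_pmf f Q) (f w)))"
  using sum_pmf_group_by[OF assms, of "\<lambda>t. log 2 (pmf (map_pmf f Q) t)" f]
  unfolding ent_def by simp

lemma jensen_log2:
  fixes q r :: "'w \<Rightarrow> real"
  assumes "finite S" "\<And>w. w \<in> S \<Longrightarrow> 0 \<le> q w" "sum q S = 1" "\<And>w. w \<in> S \<Longrightarrow> 0 < r w"
  shows "(\<Sum>w\<in>S. q w * log 2 (r w)) \<le> log 2 (\<Sum>w\<in>S. q w * r w)"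
proof -
  have "S \<noteq> {}"
    using assms(3) by auto
  then show ?thesis
    using concave_on_sum[OF assms(1) _ log_concave[of 2] assms(3,2), of r] assms(4) by simp
qed

lemma jensen_log2_unnormalized:
  fixes q r :: "'w \<Rightarrow> real"
  assumes fin: "finite S" and ne: "S \<noteq> {}"
    and q0: "\<And>w. w \<in> S \<Longrightarrow> 0 < q w" and r0: "\<And>w. w \<in> S \<Longrightarrow> 0 < r w"
  shows "(\<Sum>w\<in>S. q w * log 2 (r w)) \<le> sum q S * log 2 ((\<Sum>w\<in>S. q w * r w) / sum q S)"
proof -
  define Z where "Z = sum q S"
  have Zpos: "Z > 0"
    unfolding Z_def using fin ne q0 by (intro sum_pos) auto
  have "(\<Sum>w\<in>S. (q w / Z) * log 2 (r w)) \<le> log 2 (\<Sum>w\<in>S. (q w / Z) * r w)"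
    using fin q0 r0 Zpos
    by (intro jensen_log2) (auto simp: Z_def sum_divide_distrib[symmetric] less_imp_le)
  then have "(\<Sum>w\<in>S. q w * log 2 (r w)) / Z \<le> log 2 ((\<Sum>w\<in>S. q w * r w) / Z)"
    by (simp add: sum_divide_distrib[symmetric])
  then show ?thesis
    using Zpos unfolding Z_def[symmetric] by (simp add: divide_le_eq mult.commute)
qed

lemma ent_map_inj:
  assumes "inj f"
  shows "ent (map_pmf f p) = ent p"
proof -
  have "(\<Sum>v\<in>f ` set_pmf p. pmf (map_pmf f p) v * log 2 (pmf (map_pmf f p) v))
      = (\<Sum>v\<in>set_pmf p. pmf (map_pmf f p) (f v) * log 2 (pmf (map_pmf f p) (f v)))"
    using assms by (subst sum.reindex) (auto simp: inj_on_def)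
  also have "\<dots> = (\<Sum>v\<in>set_pmf p. pmf p v * log 2 (pmf p v))"
    using assms by (simp add: pmf_map_inj')
  finally show ?thesis
    unfolding ent_def by simp
qed

lemma ent_return_pmf [simp]: "ent (return_pmf x) = 0"
  by (simp add: ent_def)

lemma ent_map_const [simp]: "ent (map_pmf (\<lambda>w. c) Q) = 0"
  by (simp add: map_pmf_const)

lemma ent_uniform: "K > 0 \<Longrightarrow> ent (pmf_of_set {..<K}) = log 2 (real K)"
  unfolding ent_def by (simp add: set_pmf_of_set lessThan_empty_iff log_divide)

lemma pmf_map_le_of_function:
  assumes fin: "finite (set_pmf Q)" and det: "\<And>w. w \<in> set_pmf Q \<Longrightarrow> f w = \<phi> (g w)"
    and w: "w \<in> set_pmf Q"
  shows "pmf (map_pmf g Q) (g w) \<le> pmf (map_pmf f Q) (f w)"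
  unfolding pmf_map_finite_support[OF fin] using fin det w by (intro sum_mono2) auto

lemma ent_map_le_of_function:
  assumes fin: "finite (set_pmf Q)" and det: "\<And>w. w \<in> set_pmf Q \<Longrightarrow> f w = \<phi> (g w)"
  shows "ent (map_pmf f Q) \<le> ent (map_pmf g Q)"
proof -
  have "log 2 (pmf (map_pmf g Q) (g w)) \<le> log 2 (pmf (map_pmf f Q) (f w))" if w: "w \<in> set_pmf Q" for w
    using pmf_map_le_of_function[where f=f and g=g and \<phi>=\<phi>, OF fin det w] w by (simp add: pmf_positive)
  then show ?thesis
    unfolding ent_map_pmf_expectation[OF fin] by (auto intro!: sum_mono mult_left_mono)
qed

lemma ent_map_eq_of_functions:
  assumes fin: "finite (set_pmf Q)" and "\<And>w. w \<in> set_pmf Q \<Longrightarrow> f w = \<phi> (g w)"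
    and "\<And>w. w \<in> set_pmf Q \<Longrightarrow> g w = \<psi> (f w)"
  shows "ent (map_pmf f Q) = ent (map_pmf g Q)"
  using ent_map_le_of_function[where f=f and g=g and \<phi>=\<phi>, OF fin assms(2)]
    ent_map_le_of_function[where f=g and g=f and \<phi>=\<psi>, OF fin assms(3)] by linarith

lemma sum_pmf_map_pair:
  assumes fin: "finite (set_pmf Q)"
  shows "(\<Sum>a\<in>A ` set_pmf Q. pmf (map_pmf (\<lambda>w. (A w, C w)) Q) (a, c)) = pmf (map_pmf C Q) c"
proof -
  have "(\<Sum>a\<in>A ` set_pmf Q. pmf (map_pmf (\<lambda>w. (A w, C w)) Q) (a, c))
      = (\<Sum>a\<in>A ` set_pmf Q. sum (pmf Q) {w\<in>{w\<in>set_pmf Q. C w = c}. A w = a})"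
    using fin by (auto simp: pmf_map_finite_support intro!: sum.cong arg_cong[where f="sum _"])
  also have "\<dots> = sum (pmf Q) {w\<in>set_pmf Q. C w = c}"
    using fin by (intro sum.group) auto
  finally show ?thesis
    using fin by (simp add: pmf_map_finite_support)
qed

lemma sum_pmf_markov_ratio_le_1:
  fixes A :: "'w \<Rightarrow> 'a" and B :: "'w \<Rightarrow> 'b" and C :: "'w \<Rightarrow> 'c"
  assumes fin: "finite (set_pmf Q)"
  defines "Pac \<equiv> \<lambda>a c. pmf (map_pmf (\<lambda>w. (A w, C w)) Q) (a, c)"
    and "Pbc \<equiv> \<lambda>b c. pmf (map_pmf (\<lambda>w. (B w, C w)) Q) (b, c)"
    and "Pabc \<equiv> pmf (map_pmf (\<lambda>w. (A w, B w, C w)) Q)"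
    and "Pc \<equiv> pmf (map_pmf C Q)"
  shows "(\<Sum>w\<in>set_pmf Q. pmf Q w * (Pac (A w) (C w) * Pbc (B w) (C w) / (Pabc (A w, B w, C w) * Pc (C w)))) \<le> 1"
proof -
  let ?S = "set_pmf Q"
  define F where "F = (\<lambda>w. (A w, B w, C w))"
  define h where "h t = Pac (fst t) (snd (snd t)) * Pbc (fst (snd t)) (snd (snd t)) / Pc (snd (snd t))" for t
  have Pc_pos: "Pc (C w) > 0" if "w \<in> ?S" for w
    using that unfolding Pc_def by (simp add: pmf_positive)
  have "(\<Sum>w\<in>?S. pmf Q w * (Pac (A w) (C w) * Pbc (B w) (C w) / (Pabc (A w, B w, C w) * Pc (C w))))
      = (\<Sum>t\<in>F ` ?S. Pabc t * (h t / Pabc t))"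
    using sum_pmf_group_by[OF fin, of "\<lambda>t. h t / Pabc t" F]
    unfolding h_def F_def Pabc_def by (simp add: mult.commute)
  also have "\<dots> = (\<Sum>t\<in>F ` ?S. h t)"
  proof (intro sum.cong refl)
    fix t assume "t \<in> F ` ?S"
    then have "Pabc t > 0"
      unfolding Pabc_def F_def by (auto intro: pmf_positive)
    then show "Pabc t * (h t / Pabc t) = h t"
      by simp
  qed
  also have "\<dots> \<le> (\<Sum>t\<in>A ` ?S \<times> B ` ?S \<times> C ` ?S. h t)"
    using fin by (intro sum_mono2) (auto simp: F_def h_def Pac_def Pbc_def Pc_def)
  also have "\<dots> = (\<Sum>a\<in>A ` ?S. \<Sum>b\<in>B ` ?S. \<Sum>c\<in>C ` ?S. Pac a c * Pbc b c / Pc c)"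
    by (simp add: h_def sum.cartesian_product split_beta)
  also have "\<dots> = (\<Sum>a\<in>A ` ?S. \<Sum>c\<in>C ` ?S. \<Sum>b\<in>B ` ?S. Pac a c * Pbc b c / Pc c)"
    by (intro sum.cong refl sum.swap)
  also have "\<dots> = (\<Sum>c\<in>C ` ?S. \<Sum>a\<in>A ` ?S. \<Sum>b\<in>B ` ?S. Pac a c * Pbc b c / Pc c)"
    by (rule sum.swap)
  also have "\<dots> = (\<Sum>c\<in>C ` ?S. (\<Sum>a\<in>A ` ?S. Pac a c) * (\<Sum>b\<in>B ` ?S. Pbc b c) / Pc c)"
    by (simp add: sum_product sum_divide_distrib)
  also have "\<dots> = (\<Sum>c\<in>C ` ?S. Pc c)"
    using Pc_pos unfolding Pac_def Pbc_def
    by (intro sum.cong refl) (auto simp: sum_pmf_map_pair[OF fin] Pc_def)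
  also have "\<dots> = 1"
    using fin unfolding Pc_def by (simp add: sum_pmf_eq_1)
  finally show ?thesis .
qed

lemma ent_submodular:
  assumes fin: "finite (set_pmf Q)"
  shows "ent (map_pmf (\<lambda>w. (A w, B w, C w)) Q) + ent (map_pmf C Q)
       \<le> ent (map_pmf (\<lambda>w. (A w, C w)) Q) + ent (map_pmf (\<lambda>w. (B w, C w)) Q)"
proof -
  let ?S = "set_pmf Q"
  define Pac where "Pac = pmf (map_pmf (\<lambda>w. (A w, C w)) Q)"
  define Pbc where "Pbc = pmf (map_pmf (\<lambda>w. (B w, C w)) Q)"
  define Pabc where "Pabc = pmf (map_pmf (\<lambda>w. (A w, B w, C w)) Q)"
  define Pc where "Pc = pmf (map_pmf C Q)"
  define r where "r w = Pac (A w, C w) * Pbc (B w, C w) / (Pabc (A w, B w, C w) * Pc (C w))" for w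
  have pos: "Pabc (A w, B w, C w) > 0" "Pac (A w, C w) > 0" "Pbc (B w, C w) > 0" "Pc (C w) > 0"
    if "w \<in> ?S" for w
    using that unfolding Pabc_def Pac_def Pbc_def Pc_def by (auto simp: pmf_positive)
  have "ent (map_pmf (\<lambda>w. (A w, B w, C w)) Q) + ent (map_pmf C Q)
      - (ent (map_pmf (\<lambda>w. (A w, C w)) Q) + ent (map_pmf (\<lambda>w. (B w, C w)) Q))
     = (\<Sum>w\<in>?S. pmf Q w * log 2 (r w))"
  proof -
    have "pmf Q w * log 2 (r w) = pmf Q w * log 2 (Pac (A w, C w)) + pmf Q w * log 2 (Pbc (B w, C w))
        - pmf Q w * log 2 (Pabc (A w, B w, C w)) - pmf Q w * log 2 (Pc (C w))" if "w \<in> ?S" for w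
      using pos[OF that] unfolding r_def by (simp add: log_mult log_divide algebra_simps)
    then show ?thesis
      unfolding Pac_def Pbc_def Pabc_def Pc_def
      by (simp add: ent_map_pmf_expectation[OF fin] sum.distrib sum_subtractf cong: sum.cong)
  qed
  also have "(\<Sum>w\<in>?S. pmf Q w * log 2 (r w)) \<le> log 2 (\<Sum>w\<in>?S. pmf Q w * r w)"
    using fin pos by (intro jensen_log2) (auto simp: sum_pmf_eq_1 r_def)
  also have "\<dots> \<le> 0"
  proof -
    obtain w where w: "w \<in> ?S"
      using set_pmf_not_empty[of Q] by blast
    have "0 < pmf Q w * r w"
      using pos[OF w] w by (simp add: r_def pmf_positive)
    also have "\<dots> \<le> (\<Sum>w\<in>?S. pmf Q w * r w)"
      using fin w pos by (intro member_le_sum) (auto simp: r_def less_imp_le)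
    finally show ?thesis
      using sum_pmf_markov_ratio_le_1[OF fin, of A C B] unfolding r_def Pac_def Pbc_def Pabc_def Pc_def
      by simp
  qed
  finally show ?thesis
    by simp
qed

lemma cond_ent_le_of_function:
  assumes fin: "finite (set_pmf Q)" and det: "\<And>w. w \<in> set_pmf Q \<Longrightarrow> V' w = \<psi> (V w)"
  shows "ent (map_pmf (\<lambda>w. (U w, V w)) Q) - ent (map_pmf V Q)
       \<le> ent (map_pmf (\<lambda>w. (U w, V' w)) Q) - ent (map_pmf V' Q)"
proof -
  have "ent (map_pmf (\<lambda>w. (U w, V w, V' w)) Q) + ent (map_pmf V' Q)
      \<le> ent (map_pmf (\<lambda>w. (U w, V' w)) Q) + ent (map_pmf (\<lambda>w. (V w, V' w)) Q)"
    by (rule ent_submodular[OF fin])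
  moreover have "ent (map_pmf (\<lambda>w. (U w, V w, V' w)) Q) = ent (map_pmf (\<lambda>w. (U w, V w)) Q)"
    using det by (intro ent_map_eq_of_functions[OF fin, where \<phi>="\<lambda>(u,v). (u, v, \<psi> v)" and \<psi>="\<lambda>(u,v,v'). (u,v)"]) auto
  moreover have "ent (map_pmf (\<lambda>w. (V w, V' w)) Q) = ent (map_pmf V Q)"
    using det by (intro ent_map_eq_of_functions[OF fin, where \<phi>="\<lambda>v. (v, \<psi> v)" and \<psi>="fst"]) auto
  ultimately show ?thesis
    by linarith
qed

lemma cond_ent_le_ent:
  assumes fin: "finite (set_pmf Q)"
  shows "ent (map_pmf (\<lambda>w. (U w, V w)) Q) - ent (map_pmf V Q) \<le> ent (map_pmf U Q)"
proof -
  have "ent (map_pmf (\<lambda>w. (U w, V w)) Q) - ent (map_pmf V Q)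
      \<le> ent (map_pmf (\<lambda>w. (U w, ())) Q) - ent (map_pmf (\<lambda>w. ()) Q)"
    by (rule cond_ent_le_of_function[OF fin, where \<psi>="\<lambda>_. ()"]) simp
  also have "ent (map_pmf (\<lambda>w. (U w, ())) Q) = ent (map_pmf U Q)"
    by (rule ent_map_eq_of_functions[OF fin, where \<phi>="\<lambda>u. (u, ())" and \<psi>=fst]) auto
  finally show ?thesis
    by simp
qed

lemma cond_ent_of_error_indicator:
  fixes M :: "'w \<Rightarrow> nat"
  assumes fin: "finite (set_pmf Q)" and Mlt: "\<And>w. w \<in> set_pmf Q \<Longrightarrow> M w < K"
  shows "ent (map_pmf (\<lambda>w. (if E w then M w else K, E w)) Q) - ent (map_pmf E Q)
       \<le> measure_pmf.prob Q {w. E w} * log 2 (real K)"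
proof -
  let ?S = "set_pmf Q"
  define F where "F w = (if E w then M w else K, E w)" for w
  have snd_F: "snd (F w) = E w" for w
    by (simp add: F_def)
  define Pe where "Pe = measure_pmf.prob Q {w. E w}"
  define S1 where "S1 = {w\<in>?S. E w}"
  let ?PF = "pmf (map_pmf F Q)" and ?PE = "pmf (map_pmf E Q)"
  define t where "t w = pmf Q w * log 2 (?PE (E w) / ?PF (F w))" for w
  have Pe_sum: "Pe = sum (pmf Q) S1"
    unfolding Pe_def S1_def using prob_finite_support[OF fin, of "{w. E w}"]
    by (simp add: Int_def conj_commute)
  have pos: "0 < ?PE (E w)" "0 < ?PF (F w)" if "w \<in> ?S" for w
    using that by (auto intro: pmf_positive)
  have "t w = pmf Q w * log 2 (?PE (E w)) - pmf Q w * log 2 (?PF (F w))" if "w \<in> ?S" for w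
    unfolding t_def using pos[OF that] by (simp add: log_divide algebra_simps)
  then have "ent (map_pmf F Q) - ent (map_pmf E Q) = (\<Sum>w\<in>?S. t w)"
    by (simp add: ent_map_pmf_expectation[OF fin] sum_subtractf)
  also have "\<dots> = (\<Sum>w\<in>S1. t w)"
  proof -
    have "t w = 0" if "w \<in> ?S" "\<not> E w" for w
    proof -
      have "?PF (F w) = ?PE (E w)"
        unfolding pmf_map_finite_support[OF fin] using that Mlt
        by (intro arg_cong[where f="sum _"]) (auto simp: F_def)
      then show ?thesis
        unfolding t_def using pos[OF that(1)] by simp
    qed
    then show ?thesis
      unfolding S1_def using fin by (intro sum.mono_neutral_right) auto
  qed
  also have "\<dots> \<le> Pe * log 2 (real K)"
  proof (cases "S1 = {}")
    case True
    then show ?thesis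
      using Pe_sum by simp
  next
    case False
    have finS1: "finite S1"
      using fin unfolding S1_def by simp
    have Ppos: "Pe > 0"
      unfolding Pe_sum using finS1 False by (intro sum_pos) (auto simp: S1_def pmf_positive)
    have PE_eq: "?PE (E w) = Pe" if "w \<in> S1" for w
      using that unfolding Pe_sum pmf_map_finite_support[OF fin] S1_def
      by (intro arg_cong[where f="sum _"]) auto
    define C where "C = {x\<in>F ` ?S. snd x}"
    have "(\<Sum>w\<in>S1. pmf Q w * (1 / ?PF (F w)))
        = (\<Sum>w\<in>?S. pmf Q w * (\<lambda>x. if snd x then 1 / ?PF x else 0) (F w))"
      unfolding S1_def using fin by (simp add: sum.inter_filter snd_F if_distrib cong: if_cong)
    also have "\<dots> = (\<Sum>x\<in>F ` ?S. ?PF x * (if snd x then 1 / ?PF x else 0))"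
      by (rule sum_pmf_group_by[OF fin])
    also have "\<dots> = (\<Sum>x\<in>F ` ?S. if snd x then 1 else 0)"
      using pos(2) by (intro sum.cong refl) force
    also have "\<dots> = real (card C)"
      unfolding C_def using fin by (simp add: sum.inter_filter[symmetric])
    finally have sum_C: "(\<Sum>w\<in>S1. pmf Q w * (1 / ?PF (F w))) = real (card C)" .
    have "card C \<le> K"
    proof -
      have "C \<subseteq> (\<lambda>m. (m, True)) ` {..<K}"
        using Mlt by (auto simp: C_def F_def)
      then show ?thesis
        using card_mono[of "(\<lambda>m. (m, True)) ` {..<K}" C] card_image_le[of "{..<K}" "\<lambda>m. (m, True)"]
        by auto
    qed
    moreover have "card C > 0"
    proof -
      obtain w where "w \<in> S1"
        using False by blast
      then have "F w \<in> C"
        unfolding S1_def C_def F_def by auto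
      moreover have "finite C"
        unfolding C_def using fin by simp
      ultimately show ?thesis
        by (auto simp: card_gt_0_iff)
    qed
    ultimately have log_le: "log 2 (real (card C)) \<le> log 2 (real K)"
      by simp
    have "(\<Sum>w\<in>S1. t w) \<le> sum (pmf Q) S1 * log 2 ((\<Sum>w\<in>S1. pmf Q w * (?PE (E w) / ?PF (F w))) / sum (pmf Q) S1)"
      unfolding t_def using finS1 False
    proof (intro jensen_log2_unnormalized)
      fix w assume "w \<in> S1"
      then have "w \<in> ?S"
        by (simp add: S1_def)
      then show "0 < pmf Q w" "0 < ?PE (E w) / ?PF (F w)"
        using pos by (simp_all add: pmf_positive)
    qed
    also have "(\<Sum>w\<in>S1. pmf Q w * (?PE (E w) / ?PF (F w))) = Pe * (\<Sum>w\<in>S1. pmf Q w * (1 / ?PF (F w)))"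
      using PE_eq by (simp add: sum_distrib_left mult.commute)
    also have "sum (pmf Q) S1 * log 2 (Pe * (\<Sum>w\<in>S1. pmf Q w * (1 / ?PF (F w))) / sum (pmf Q) S1)
        = Pe * log 2 (real (card C))"
      using Ppos sum_C by (simp add: Pe_sum[symmetric])
    also have "\<dots> \<le> Pe * log 2 (real K)"
      using Ppos log_le by (simp add: mult_left_mono)
    finally show ?thesis .
  qed
  finally show ?thesis
    unfolding F_def Pe_def .
qed

theorem fano_inequality:
  fixes M :: "'w \<Rightarrow> nat"
  assumes fin: "finite (set_pmf Q)" and Mlt: "\<And>w. w \<in> set_pmf Q \<Longrightarrow> M w < K"
  shows "ent (map_pmf (\<lambda>w. (M w, V w)) Q) - ent (map_pmf V Q)
      \<le> ent (map_pmf (\<lambda>w. dec (V w) \<noteq> M w) Q) + measure_pmf.prob Q {w. dec (V w) \<noteq> M w} * log 2 (real K)"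
proof -
  define E where "E w = (dec (V w) \<noteq> M w)" for w
  define M' where "M' w = (if E w then M w else K)" for w
  have "ent (map_pmf (\<lambda>w. (M w, V w)) Q) \<le> ent (map_pmf (\<lambda>w. (M' w, E w, V w)) Q)"
    by (rule ent_map_le_of_function[OF fin, where \<phi>="\<lambda>(m', e, v). (if e then m' else dec v, v)"])
       (auto simp: M'_def E_def)
  moreover have "ent (map_pmf (\<lambda>w. (M' w, E w, V w)) Q) - ent (map_pmf (\<lambda>w. (E w, V w)) Q)
      \<le> ent (map_pmf (\<lambda>w. (M' w, E w)) Q) - ent (map_pmf E Q)"
    using cond_ent_le_of_function[OF fin, of "\<lambda>w. E w" fst "\<lambda>w. (E w, V w)" M'] by simp
  moreover have "ent (map_pmf (\<lambda>w. (E w, V w)) Q) - ent (map_pmf V Q) \<le> ent (map_pmf E Q)"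
    by (rule cond_ent_le_ent[OF fin])
  moreover have "ent (map_pmf (\<lambda>w. (M' w, E w)) Q) - ent (map_pmf E Q)
      \<le> measure_pmf.prob Q {w. E w} * log 2 (real K)"
    unfolding M'_def by (rule cond_ent_of_error_indicator[OF fin Mlt])
  ultimately have "ent (map_pmf (\<lambda>w. (M w, V w)) Q) - ent (map_pmf V Q)
      \<le> ent (map_pmf E Q) + measure_pmf.prob Q {w. E w} * log 2 (real K)"
    by linarith
  then show ?thesis
    unfolding E_def .
qed

lemma ent_chain_rule_list:
  assumes fin: "finite (set_pmf Q)" and len: "\<And>w. w \<in> set_pmf Q \<Longrightarrow> length (H w) = n"
  shows "ent (map_pmf (\<lambda>w. (map F (H w), B w)) Q) - ent (map_pmf B Q)
     = (\<Sum>k<n. ent (map_pmf (\<lambda>w. (F (H w ! k), (take k (map F (H w)), B w))) Q)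
              - ent (map_pmf (\<lambda>w. (take k (map F (H w)), B w)) Q))"
proof -
  let ?e = "\<lambda>k. ent (map_pmf (\<lambda>w. (take k (map F (H w)), B w)) Q)"
  have "?e (Suc k) = ent (map_pmf (\<lambda>w. (F (H w ! k), (take k (map F (H w)), B w))) Q)" if "k < n" for k
    using that len
    by (intro ent_map_eq_of_functions[OF fin, where \<phi>="\<lambda>(x, p, b). (p @ [x], b)"
          and \<psi>="\<lambda>(p', b). (last p', butlast p', b)"]) (auto simp: take_Suc_conv_app_nth)
  then have "(\<Sum>k<n. ent (map_pmf (\<lambda>w. (F (H w ! k), (take k (map F (H w)), B w))) Q) - ?e k)
      = (\<Sum>k<n. ?e (Suc k) - ?e k)"
    by (intro sum.cong) auto
  also have "\<dots> = ?e n - ?e 0"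
    by (rule sum_lessThan_telescope)
  also have "?e n = ent (map_pmf (\<lambda>w. (map F (H w), B w)) Q)"
    by (rule ent_map_eq_of_functions[OF fin, where \<phi>="\<lambda>x. x" and \<psi>="\<lambda>x. x"]) (auto simp: len)
  also have "?e 0 = ent (map_pmf B Q)"
    by (rule ent_map_eq_of_functions[OF fin, where \<phi>="\<lambda>b. ([], b)" and \<psi>=snd]) auto
  finally show ?thesis
    by simp
qed

definition binary_entropy :: "real \<Rightarrow> real" where
  "binary_entropy p = - (p * log 2 p + (1 - p) * log 2 (1 - p))"

lemma ent_bool: "ent (map_pmf (E :: 'w \<Rightarrow> bool) Q) = binary_entropy (measure_pmf.prob Q {w. E w})"
proof -
  let ?p = "map_pmf E Q"
  have "pmf ?p True = measure_pmf.prob Q {w. E w}"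
    by (simp add: pmf_map vimage_def)
  moreover have "pmf ?p False = 1 - measure_pmf.prob Q {w. E w}"
  proof -
    have "pmf ?p False = measure_pmf.prob Q (- {w. E w})"
      by (simp add: pmf_map vimage_def Compl_eq)
    also have "\<dots> = 1 - measure_pmf.prob Q {w. E w}"
      using measure_pmf.prob_compl[of "{w. E w}" Q] by (simp add: Compl_eq_Diff_UNIV)
    finally show ?thesis .
  qed
  ultimately show ?thesis
    unfolding ent_finite_type binary_entropy_def UNIV_bool by simp
qed

section \<open>Conditional distributions\<close>

text \<open>Given the first component v, the second one has law k v; k is unconstrained off the support.\<close>
definition has_cond_distr :: "('v \<times> 'u) pmf \<Rightarrow> ('v \<Rightarrow> 'u pmf) \<Rightarrow> bool" where
  "has_cond_distr D k \<longleftrightarrow> D = bind_pmf (map_pmf fst D) (\<lambda>v. map_pmf (Pair v) (k v))"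

lemma pmf_bind_Pair_kernel: "pmf (bind_pmf L (\<lambda>v. map_pmf (Pair v) (k v))) (v, u) = pmf L v * pmf (k v) u"
proof -
  have eq: "pmf (map_pmf (Pair v') (k v')) (v, u) = indicator {v} v' * pmf (k v) u" for v'
  proof (cases "v' = v")
    case True
    then show ?thesis by (simp add: pmf_map_inj' inj_on_def)
  next
    case False
    then have "(v, u) \<notin> set_pmf (map_pmf (Pair v') (k v'))" by auto
    then show ?thesis using False by (simp add: set_pmf_eq)
  qed
  show ?thesis unfolding pmf_bind eq by (simp add: measure_pmf_single)
qed

lemma has_cond_distr_pmf: "has_cond_distr D k \<Longrightarrow> pmf D (v, u) = pmf (map_pmf fst D) v * pmf (k v) u"
  unfolding has_cond_distr_def by (metis pmf_bind_Pair_kernel)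

lemma has_cond_distrI:
  assumes "\<And>v u. pmf D (v, u) = pmf (map_pmf fst D) v * pmf (k v) u"
  shows "has_cond_distr D k"
  unfolding has_cond_distr_def by (rule pmf_eqI) (auto simp: pmf_bind_Pair_kernel assms)

lemma has_cond_distr_map_snd:
  assumes "has_cond_distr D k"
  shows "has_cond_distr (map_pmf (\<lambda>(v, u). (v, g u)) D) (\<lambda>v. map_pmf g (k v))"
proof -
  have D: "D = bind_pmf (map_pmf fst D) (\<lambda>v. map_pmf (Pair v) (k v))" using assms unfolding has_cond_distr_def .
  have "map_pmf fst (map_pmf (\<lambda>(v, u). (v, g u)) D) = map_pmf fst D"
    by (simp add: map_pmf_comp split_beta)
  moreover have "map_pmf (\<lambda>(v, u). (v, g u)) D = bind_pmf (map_pmf fst D) (\<lambda>v. map_pmf (Pair v) (map_pmf g (k v)))"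
    by (subst D) (simp add: map_bind_pmf map_pmf_comp)
  ultimately show ?thesis unfolding has_cond_distr_def by simp
qed

lemma has_cond_distr_map_fst:
  assumes "has_cond_distr D k" and kk: "\<And>v. v \<in> set_pmf (map_pmf fst D) \<Longrightarrow> k v = k' (\<psi> v)"
  shows "has_cond_distr (map_pmf (\<lambda>(v, u). (\<psi> v, u)) D) k'"
proof -
  have D: "D = bind_pmf (map_pmf fst D) (\<lambda>v. map_pmf (Pair v) (k v))" using assms(1) unfolding has_cond_distr_def .
  have m: "map_pmf fst (map_pmf (\<lambda>(v, u). (\<psi> v, u)) D) = map_pmf \<psi> (map_pmf fst D)"
    by (simp add: map_pmf_comp split_beta)
  have "map_pmf (\<lambda>(v, u). (\<psi> v, u)) D = bind_pmf (map_pmf fst D) (\<lambda>v. map_pmf (Pair (\<psi> v)) (k v))"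
    by (subst D) (simp add: map_bind_pmf map_pmf_comp)
  also have "\<dots> = bind_pmf (map_pmf fst D) (\<lambda>v. map_pmf (Pair (\<psi> v)) (k' (\<psi> v)))"
    using kk by (intro bind_pmf_cong) auto
  also have "\<dots> = bind_pmf (map_pmf \<psi> (map_pmf fst D)) (\<lambda>v. map_pmf (Pair v) (k' v))"
    by (simp add: bind_map_pmf)
  finally show ?thesis unfolding has_cond_distr_def m .
qed

text \<open>Conditional law of the first component given the second; junk if u2 has probability 0.\<close>
definition posterior :: "('u1 \<times> 'u2) pmf \<Rightarrow> 'u2 \<Rightarrow> 'u1 pmf" where
  "posterior p u2 = map_pmf fst (cond_pmf p {x. snd x = u2})"

lemma pmf_posterior: "pmf (map_pmf snd p) u2 * pmf (posterior p u2) u1 = pmf p (u1, u2)"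
proof (cases "pmf (map_pmf snd p) u2 = 0")
  case True
  have "pmf p (u1, u2) \<le> pmf (map_pmf snd p) u2"
    by (simp add: pmf_map pmf.rep_eq measure_pmf.finite_measure_mono)
  then show ?thesis using True pmf_nonneg[of p "(u1,u2)"] by simp
next
  case False
  let ?A = "{x. snd x = u2}"
  have mA: "measure_pmf.prob p ?A = pmf (map_pmf snd p) u2" by (simp add: pmf_map vimage_def)
  have ne: "set_pmf p \<inter> ?A \<noteq> {}"
  proof
    assume "set_pmf p \<inter> ?A = {}"
    then have "u2 \<notin> set_pmf (map_pmf snd p)" by auto
    then show False using False by (simp add: set_pmf_eq)
  qed
  show ?thesis
  proof (cases "(u1, u2) \<in> set_pmf p")
    case True
    have inj: "inj_on fst (set_pmf (cond_pmf p ?A))" using ne by (auto simp: inj_on_def prod_eq_iff)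
    have "pmf (posterior p u2) u1 = pmf (cond_pmf p ?A) (u1, u2)"
      unfolding posterior_def using pmf_map_inj[OF inj, of "(u1,u2)"] True ne by simp
    also have "\<dots> = pmf p (u1, u2) / pmf (map_pmf snd p) u2"
      using ne by (simp add: pmf_cond mA)
    finally show ?thesis using False by simp
  next
    case nT: False
    have "u1 \<notin> set_pmf (posterior p u2)"
      unfolding posterior_def using ne nT by auto
    then show ?thesis using nT by (simp add: set_pmf_eq)
  qed
qed

lemma has_cond_distr_posterior:
  assumes kf: "has_cond_distr D k"
  shows "has_cond_distr (map_pmf (\<lambda>(v, (u1, u2)). ((v, u2), u1)) D) (\<lambda>(v, u2). posterior (k v) u2)"
proof -
  have inj: "inj (\<lambda>(v, (u1, u2)). ((v, u2), u1))" by (auto simp: inj_on_def)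
  have m: "map_pmf fst (map_pmf (\<lambda>(v, (u1, u2)). ((v, u2), u1)) D) = map_pmf (\<lambda>(v, u). (v, snd u)) D"
    by (simp add: map_pmf_comp split_beta case_prod_beta')
  have kf2: "has_cond_distr (map_pmf (\<lambda>(v, u). (v, snd u)) D) (\<lambda>v. map_pmf snd (k v))"
    by (rule has_cond_distr_map_snd[OF kf])
  have m2: "map_pmf fst (map_pmf (\<lambda>(v, u). (v, snd u)) D) = map_pmf fst D"
    by (simp add: map_pmf_comp split_beta)
  have key: "pmf (map_pmf (\<lambda>(v, (u1, u2)). ((v, u2), u1)) D) ((v, u2), u1) =
        pmf (map_pmf fst (map_pmf (\<lambda>(v, (u1, u2)). ((v, u2), u1)) D)) (v, u2) * pmf (posterior (k v) u2) u1" for v u2 u1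
  proof -
    have l: "pmf (map_pmf (\<lambda>(v, (u1, u2)). ((v, u2), u1)) D) ((v, u2), u1) = pmf D (v, (u1, u2))"
      using pmf_map_inj'[OF inj, of D "(v,(u1,u2))"] by simp
    show ?thesis
      unfolding l m has_cond_distr_pmf[OF kf2] m2 has_cond_distr_pmf[OF kf]
      using pmf_posterior[of "k v" u2 u1] by (simp add: mult.assoc)
  qed
  show ?thesis
  proof (rule has_cond_distrI)
    fix vu u
    show "pmf (map_pmf (\<lambda>(v, u1, u2). ((v, u2), u1)) D) (vu, u)
        = pmf (map_pmf fst (map_pmf (\<lambda>(v, u1, u2). ((v, u2), u1)) D)) vu * pmf ((\<lambda>(v, u2). posterior (k v) u2) vu) u"
      by (cases vu) (simp only: key prod.case)
  qed
qed

lemma has_cond_distr_bind: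
  assumes "\<And>z. z \<in> set_pmf Z \<Longrightarrow> has_cond_distr (F z) (\<lambda>v. k (z, v))"
  shows "has_cond_distr (bind_pmf Z (\<lambda>z. map_pmf (\<lambda>(v, u). ((z, v), u)) (F z))) k"
proof -
  have F: "F z = bind_pmf (map_pmf fst (F z)) (\<lambda>v. map_pmf (Pair v) (k (z, v)))" if "z \<in> set_pmf Z" for z
    using assms[OF that] unfolding has_cond_distr_def .
  have "bind_pmf Z (\<lambda>z. map_pmf (\<lambda>(v, u). ((z, v), u)) (F z))
      = bind_pmf Z (\<lambda>z. map_pmf (\<lambda>(v, u). ((z, v), u)) (bind_pmf (map_pmf fst (F z)) (\<lambda>v. map_pmf (Pair v) (k (z, v)))))"
    using F by (intro bind_pmf_cong) auto
  also have "\<dots> = bind_pmf (map_pmf fst (bind_pmf Z (\<lambda>z. map_pmf (\<lambda>(v, u). ((z, v), u)) (F z)))) (\<lambda>v. map_pmf (Pair v) (k v))"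
    by (simp add: map_bind_pmf map_pmf_comp bind_assoc_pmf bind_map_pmf split_beta)
  finally show ?thesis unfolding has_cond_distr_def .
qed

lemma has_cond_distr_extend:
  assumes "has_cond_distr D k"
  shows "has_cond_distr (bind_pmf D (\<lambda>(v, u). map_pmf (\<lambda>c. ((v, c), u)) (G v))) (\<lambda>(v, c). k v)"
proof -
  let ?L = "map_pmf fst D"
  have D: "D = bind_pmf ?L (\<lambda>v. map_pmf (Pair v) (k v))" using assms unfolding has_cond_distr_def .
  have lhs: "bind_pmf D (\<lambda>(v, u). map_pmf (\<lambda>c. ((v, c), u)) (G v))
     = bind_pmf ?L (\<lambda>v. bind_pmf (G v) (\<lambda>c. map_pmf (\<lambda>u. ((v, c), u)) (k v)))"
    by (subst D, simp add: bind_assoc_pmf bind_map_pmf map_pmf_def[where M="G _"] map_pmf_def[where M="k _"]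
        bind_return_pmf, subst bind_commute_pmf, simp)
  have fst_eq: "map_pmf fst (bind_pmf D (\<lambda>(v, u). map_pmf (\<lambda>c. ((v, c), u)) (G v)))
     = bind_pmf ?L (\<lambda>v. map_pmf (Pair v) (G v))"
    unfolding lhs by (simp add: map_bind_pmf map_pmf_comp bind_pmf_const map_pmf_def[symmetric])
  show ?thesis unfolding has_cond_distr_def fst_eq
    by (simp add: lhs bind_assoc_pmf bind_map_pmf split_beta)
qed

lemma set_pmf_has_cond_distr:
  assumes "has_cond_distr D k"
  shows "set_pmf D = Sigma (set_pmf (map_pmf fst D)) (\<lambda>v. set_pmf (k v))"
proof -
  have "set_pmf D = set_pmf (bind_pmf (map_pmf fst D) (\<lambda>v. map_pmf (Pair v) (k v)))"
    using assms unfolding has_cond_distr_def by simp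
  also have "\<dots> = Sigma (set_pmf (map_pmf fst D)) (\<lambda>v. set_pmf (k v))" by auto
  finally show ?thesis .
qed

lemma finite_set_pmf_cond_distr:
  assumes kf: "has_cond_distr D k" and fin: "finite (set_pmf D)" and v: "v \<in> set_pmf (map_pmf fst D)"
  shows "finite (set_pmf (k v))"
proof -
  have "Pair v ` set_pmf (k v) \<subseteq> set_pmf D" using set_pmf_has_cond_distr[OF kf] v by auto
  then have "finite (Pair v ` set_pmf (k v))" using fin finite_subset by blast
  then show ?thesis by (rule finite_imageD) (auto simp: inj_on_def)
qed

lemma sum_has_cond_distr:
  assumes kf: "has_cond_distr D k" and fin: "finite (set_pmf D)"
  shows "(\<Sum>x\<in>set_pmf D. pmf D x * f x)
       = (\<Sum>v\<in>set_pmf (map_pmf fst D). pmf (map_pmf fst D) v * (\<Sum>u\<in>set_pmf (k v). pmf (k v) u * f (v, u)))"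
proof -
  let ?L = "map_pmf fst D"
  have finL: "finite (set_pmf ?L)" using fin by simp
  have "(\<Sum>x\<in>set_pmf D. pmf D x * f x) = (\<Sum>v\<in>set_pmf ?L. \<Sum>u\<in>set_pmf (k v). pmf D (v, u) * f (v, u))"
    unfolding set_pmf_has_cond_distr[OF kf] using finL finite_set_pmf_cond_distr[OF kf fin] by (subst sum.Sigma) auto
  also have "\<dots> = (\<Sum>v\<in>set_pmf ?L. pmf ?L v * (\<Sum>u\<in>set_pmf (k v). pmf (k v) u * f (v, u)))"
    by (simp add: has_cond_distr_pmf[OF kf] sum_distrib_left mult.assoc)
  finally show ?thesis .
qed

lemma ent_has_cond_distr:
  assumes kf: "has_cond_distr D k" and fin: "finite (set_pmf D)"
  shows "ent D = ent (map_pmf fst D) + (\<Sum>v\<in>set_pmf (map_pmf fst D). pmf (map_pmf fst D) v * ent (k v))"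
proof -
  let ?L = "map_pmf fst D"
  have finL: "finite (set_pmf ?L)" using fin by simp
  have "(\<Sum>x\<in>set_pmf D. pmf D x * log 2 (pmf D x))
     = (\<Sum>v\<in>set_pmf ?L. pmf ?L v * (\<Sum>u\<in>set_pmf (k v). pmf (k v) u * log 2 (pmf D (v, u))))"
    by (rule sum_has_cond_distr[OF kf fin])
  also have "\<dots> = (\<Sum>v\<in>set_pmf ?L. pmf ?L v * log 2 (pmf ?L v) + pmf ?L v * (\<Sum>u\<in>set_pmf (k v). pmf (k v) u * log 2 (pmf (k v) u)))"
  proof (intro sum.cong refl)
    fix v assume v: "v \<in> set_pmf ?L"
    have Lpos: "pmf ?L v > 0" using v by (simp add: pmf_positive)
    have "(\<Sum>u\<in>set_pmf (k v). pmf (k v) u * log 2 (pmf D (v, u)))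
       = (\<Sum>u\<in>set_pmf (k v). pmf (k v) u * log 2 (pmf ?L v) + pmf (k v) u * log 2 (pmf (k v) u))"
      using Lpos by (intro sum.cong refl) (simp add: has_cond_distr_pmf[OF kf] log_mult pmf_positive distrib_left)
    also have "\<dots> = log 2 (pmf ?L v) + (\<Sum>u\<in>set_pmf (k v). pmf (k v) u * log 2 (pmf (k v) u))"
      using finite_set_pmf_cond_distr[OF kf fin v] by (simp add: sum.distrib sum_distrib_right[symmetric] sum_pmf_eq_1)
    finally show "pmf ?L v * (\<Sum>u\<in>set_pmf (k v). pmf (k v) u * log 2 (pmf D (v, u))) =
         pmf ?L v * log 2 (pmf ?L v) + pmf ?L v * (\<Sum>u\<in>set_pmf (k v). pmf (k v) u * log 2 (pmf (k v) u))"
      by (simp add: distrib_left)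
  qed
  finally show ?thesis unfolding ent_def by (simp add: sum.distrib sum_negf)
qed

lemma cond_ent_has_cond_distr:
  assumes kf: "has_cond_distr D k" and fin: "finite (set_pmf D)"
  shows "ent D - ent (map_pmf fst D) = measure_pmf.expectation (map_pmf fst D) (\<lambda>v. ent (k v))"
proof -
  have "measure_pmf.expectation (map_pmf fst D) (\<lambda>v. ent (k v))
      = (\<Sum>v\<in>set_pmf (map_pmf fst D). pmf (map_pmf fst D) v * ent (k v))"
    by (rule expectation_finite_support) (simp add: fin)
  then show ?thesis
    using ent_has_cond_distr[OF kf fin] by simp
qed

lemma cond_ent_eq_expectation:
  assumes kf: "has_cond_distr (map_pmf (\<lambda>w. (V w, U w)) Q) k" and fin: "finite (set_pmf Q)"
  shows "ent (map_pmf (\<lambda>w. (U w, V w)) Q) - ent (map_pmf V Q) = measure_pmf.expectation Q (\<lambda>w. ent (k (V w)))"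
proof -
  have "inj (\<lambda>(v, u). (u, v))"
    by (auto simp: inj_on_def)
  then have "ent (map_pmf (\<lambda>w. (U w, V w)) Q) = ent (map_pmf (\<lambda>w. (V w, U w)) Q)"
    using ent_map_inj[of "\<lambda>(v, u). (u, v)" "map_pmf (\<lambda>w. (V w, U w)) Q"] by (simp add: map_pmf_comp)
  moreover have "ent (map_pmf (\<lambda>w. (V w, U w)) Q) - ent (map_pmf V Q) = measure_pmf.expectation Q (\<lambda>w. ent (k (V w)))"
    using cond_ent_has_cond_distr[OF kf] fin by (simp add: map_pmf_comp)
  ultimately show ?thesis
    by simp
qed

lemma has_cond_distr_Pair: "k v0 = P \<Longrightarrow> has_cond_distr (map_pmf (Pair v0) P) k"
  unfolding has_cond_distr_def by (simp add: map_pmf_comp bind_return_pmf)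

definition bayes_risk :: "('s::finite) pmf \<Rightarrow> ('s \<Rightarrow> 'e::finite \<Rightarrow> real) \<Rightarrow> real" where
  "bayes_risk k d = Min (range (\<lambda>t. \<Sum>s\<in>UNIV. pmf k s * d s t))"

lemma bayes_risk_le: "bayes_risk k d \<le> (\<Sum>s\<in>UNIV. pmf k s * d s t)"
  unfolding bayes_risk_def by (rule Min_le) auto

lemma expectation_ge_bayes_risk:
  fixes q :: "('v \<times> 's::finite) pmf"
  assumes kf: "has_cond_distr q k" and fin: "finite (set_pmf q)"
  shows "measure_pmf.expectation (map_pmf fst q) (\<lambda>v. bayes_risk (k v) d) \<le> measure_pmf.expectation q (\<lambda>(v, s). d s (e v))"
proof -
  have finL: "finite (set_pmf (map_pmf fst q))" using fin by simp
  have "measure_pmf.expectation q (\<lambda>(v, s). d s (e v)) = (\<Sum>x\<in>set_pmf q. pmf q x * (\<lambda>(v, s). d s (e v)) x)"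
    by (rule expectation_finite_support[OF fin])
  also have "\<dots> = (\<Sum>v\<in>set_pmf (map_pmf fst q). pmf (map_pmf fst q) v * (\<Sum>s\<in>set_pmf (k v). pmf (k v) s * d s (e v)))"
    by (subst sum_has_cond_distr[OF kf fin]) simp
  also have "\<dots> \<ge> (\<Sum>v\<in>set_pmf (map_pmf fst q). pmf (map_pmf fst q) v * bayes_risk (k v) d)"
    by (intro sum_mono mult_left_mono) (simp_all add: sum_pmf_finite_type bayes_risk_le)
  also have "(\<Sum>v\<in>set_pmf (map_pmf fst q). pmf (map_pmf fst q) v * bayes_risk (k v) d) = measure_pmf.expectation (map_pmf fst q) (\<lambda>v. bayes_risk (k v) d)"
    by (rule expectation_finite_support[OF finL, symmetric])
  finally show ?thesis .
qed

lemma expectation_bayes_est: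
  fixes q :: "('v \<times> 's::finite) pmf" and e :: "'v \<Rightarrow> 'e::finite"
  assumes kf: "has_cond_distr q k" and fin: "finite (set_pmf q)" and b: "bayes_est q d e"
  shows "measure_pmf.expectation q (\<lambda>(v, s). d s (e v)) = measure_pmf.expectation (map_pmf fst q) (\<lambda>v. bayes_risk (k v) d)"
proof -
  have finL: "finite (set_pmf (map_pmf fst q))" using fin by simp
  have pt: "(\<Sum>s\<in>set_pmf (k v). pmf (k v) s * d s (e v)) = bayes_risk (k v) d" if v: "v \<in> set_pmf (map_pmf fst q)" for v
  proof -
    have Lpos: "pmf (map_pmf fst q) v > 0" using v by (simp add: pmf_positive)
    have cp: "cpmf q v s = pmf (k v) s" for s
      unfolding cpmf_def has_cond_distr_pmf[OF kf] using Lpos by simp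
    have opt: "(\<Sum>s\<in>UNIV. pmf (k v) s * d s (e v)) \<le> (\<Sum>s\<in>UNIV. pmf (k v) s * d s t)" for t
      using b[unfolded bayes_est_def, rule_format, of v t] unfolding cp by simp
    have "bayes_risk (k v) d = (\<Sum>s\<in>UNIV. pmf (k v) s * d s (e v))"
      unfolding bayes_risk_def by (rule Min_eqI) (auto intro: opt)
    then show ?thesis by (simp add: sum_pmf_finite_type)
  qed
  have "measure_pmf.expectation q (\<lambda>(v, s). d s (e v)) = (\<Sum>x\<in>set_pmf q. pmf q x * (\<lambda>(v, s). d s (e v)) x)"
    by (rule expectation_finite_support[OF fin])
  also have "\<dots> = (\<Sum>v\<in>set_pmf (map_pmf fst q). pmf (map_pmf fst q) v * (\<Sum>s\<in>set_pmf (k v). pmf (k v) s * d s (e v)))"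
    by (subst sum_has_cond_distr[OF kf fin]) simp
  also have "\<dots> = (\<Sum>v\<in>set_pmf (map_pmf fst q). pmf (map_pmf fst q) v * bayes_risk (k v) d)"
    using pt by simp
  also have "\<dots> = measure_pmf.expectation (map_pmf fst q) (\<lambda>v. bayes_risk (k v) d)"
    by (rule expectation_finite_support[OF finL, symmetric])
  finally show ?thesis .
qed

section \<open>The single-letter distribution\<close>

instance sym :: (finite, finite, finite, finite, finite, finite) finite
proof
  have "(UNIV :: ('a,'b,'c,'d,'e,'f) sym set) = (\<lambda>(a,b,c,d,e,f). Sym a b c d e f) ` UNIV"
    by (auto simp: image_iff) (metis sym.exhaust)
  then show "finite (UNIV :: ('a,'b,'c,'d,'e,'f) sym set)"
    by (metis finite finite_imageI)
qed

definition channel_law ::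
  "('a \<Rightarrow> ('s1 \<times> 's2) pmf) \<Rightarrow> ('s1 \<Rightarrow> 's2 \<Rightarrow> 'x \<Rightarrow> ('y1 \<times> 'y2) pmf)
    \<Rightarrow> 'a \<Rightarrow> 'x \<Rightarrow> (('s1 \<times> 's2) \<times> ('y1 \<times> 'y2)) pmf" where
  "channel_law PS W a x = bind_pmf (PS a) (\<lambda>s. map_pmf (Pair s) (W (fst s) (snd s) x))"

definition mk_sym :: "'a \<Rightarrow> 'x \<Rightarrow> ('s1 \<times> 's2) \<times> ('y1 \<times> 'y2) \<Rightarrow> ('a,'x,'s1,'s2,'y1,'y2) sym" where
  "mk_sym a x u = Sym a x (fst (fst u)) (snd (fst u)) (fst (snd u)) (snd (snd u))"

lemma mk_sym_sel [simp]:
  "sA (mk_sym a x u) = a" "sX (mk_sym a x u) = x" "sS1 (mk_sym a x u) = fst (fst u)"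
  "sS2 (mk_sym a x u) = snd (fst u)" "sY1 (mk_sym a x u) = fst (snd u)" "sY2 (mk_sym a x u) = snd (snd u)"
  by (simp_all add: mk_sym_def)

lemma mk_sym_sel_eq: "c = mk_sym (sA c) (sX c) ((sS1 c, sS2 c), (sY1 c, sY2 c))"
  by (cases c) (simp add: mk_sym_def)

lemma joint1_eq:
  "joint1 PS W P = bind_pmf P (\<lambda>ax. map_pmf (mk_sym (fst ax) (snd ax)) (channel_law PS W (fst ax) (snd ax)))"
  unfolding joint1_def channel_law_def
  by (simp add: map_bind_pmf map_pmf_comp mk_sym_def map_pmf_def bind_assoc_pmf bind_return_pmf)

lemma joint1_bind_pmf: "joint1 PS W (bind_pmf U P) = bind_pmf U (\<lambda>i. joint1 PS W (P i))"
  unfolding joint1_eq by (simp add: bind_assoc_pmf)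

lemma map_pmf_joint1_input: "map_pmf (\<lambda>c. (sA c, sX c)) (joint1 PS W P) = P"
  unfolding joint1_eq by (simp add: map_bind_pmf map_pmf_comp bind_pmf_const map_pmf_def[symmetric])

lemma has_cond_distr_joint1:
  "has_cond_distr (map_pmf (\<lambda>c. ((sA c, sX c), ((sS1 c, sS2 c), (sY1 c, sY2 c)))) (joint1 PS W P))
     (\<lambda>(a, x). channel_law PS W a x)"
proof -
  have "map_pmf fst (map_pmf (\<lambda>c. ((sA c, sX c), ((sS1 c, sS2 c), (sY1 c, sY2 c)))) (joint1 PS W P)) = P"
    using map_pmf_joint1_input[of PS W P] by (simp add: map_pmf_comp)
  then show ?thesis
    unfolding has_cond_distr_def joint1_eq by (simp add: map_bind_pmf map_pmf_comp split_beta)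
qed

lemma has_cond_distr_joint1_states:
  "has_cond_distr (map_pmf (\<lambda>c. (((sA c, sX c), (sY1 c, sY2 c)), (sS1 c, sS2 c))) (joint1 PS W P))
     (\<lambda>(v, y). posterior (channel_law PS W (fst v) (snd v)) y)"
  using has_cond_distr_posterior[OF has_cond_distr_joint1[of PS W P]]
  by (simp add: map_pmf_comp split_beta case_prod_beta')

lemma has_cond_distr_joint1_state_fun:
  "has_cond_distr (map_pmf (\<lambda>c. ((sA c, sX c, sY1 c, sY2 c), G (sS1 c, sS2 c))) (joint1 PS W P))
     (\<lambda>(a, x, y1, y2). map_pmf G (posterior (channel_law PS W a x) (y1, y2)))"
proof -
  have "has_cond_distr (map_pmf (\<lambda>(v, u). ((\<lambda>(ax, y). (fst ax, snd ax, fst y, snd y)) v, u))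
      (map_pmf (\<lambda>(v, u). (v, G u)) (map_pmf (\<lambda>c. (((sA c, sX c), (sY1 c, sY2 c)), (sS1 c, sS2 c))) (joint1 PS W P))))
     (\<lambda>(a, x, y1, y2). map_pmf G (posterior (channel_law PS W a x) (y1, y2)))"
    by (rule has_cond_distr_map_fst[OF has_cond_distr_map_snd[OF has_cond_distr_joint1_states]]) auto
  then show ?thesis
    by (simp add: map_pmf_comp split_beta)
qed

text \<open>In the paper's notation, residual_state_ent is the pointwise conditional entropy
  H(S1 | A X Y1 Y2 S2 = a x y1 y2 s2) and obs_ent is H(Y1 S1 | A X = a x).\<close>

definition residual_state_ent ::
  "('a \<Rightarrow> ('s1 \<times> 's2) pmf) \<Rightarrow> ('s1 \<Rightarrow> 's2 \<Rightarrow> 'x \<Rightarrow> ('y1 \<times> 'y2) pmf)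
    \<Rightarrow> 'a \<Rightarrow> 'x \<Rightarrow> 'y1 \<Rightarrow> 'y2 \<Rightarrow> 's2 \<Rightarrow> real" where
  "residual_state_ent PS W a x y1 y2 s2 = ent (posterior (posterior (channel_law PS W a x) (y1, y2)) s2)"

definition obs_ent ::
  "('a \<Rightarrow> ('s1 \<times> 's2) pmf) \<Rightarrow> ('s1 \<Rightarrow> 's2 \<Rightarrow> 'x \<Rightarrow> ('y1 \<times> 'y2) pmf)
    \<Rightarrow> 'a \<Rightarrow> 'x \<Rightarrow> real" where
  "obs_ent PS W a x = ent (map_pmf (\<lambda>(s, y). (fst y, fst s)) (channel_law PS W a x))"

definition secrecy_bound ::
  "('a \<Rightarrow> ('s1 \<times> 's2) pmf) \<Rightarrow> ('s1 \<Rightarrow> 's2 \<Rightarrow> 'x \<Rightarrow> ('y1 \<times> 'y2) pmf)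
    \<Rightarrow> ('a,'x,'s1,'s2,'y1,'y2) sym pmf \<Rightarrow> real" where
  "secrecy_bound PS W J = ent (map_pmf (\<lambda>c. ((sY1 c, sS1 c), (sY2 c, sS2 c))) J) - ent (map_pmf (\<lambda>c. (sY2 c, sS2 c)) J)
     - measure_pmf.expectation J (\<lambda>c. residual_state_ent PS W (sA c) (sX c) (sY1 c) (sY2 c) (sS2 c))"

definition reliability_bound ::
  "('a \<Rightarrow> ('s1 \<times> 's2) pmf) \<Rightarrow> ('s1 \<Rightarrow> 's2 \<Rightarrow> 'x \<Rightarrow> ('y1 \<times> 'y2) pmf)
    \<Rightarrow> ('a,'x,'s1,'s2,'y1,'y2) sym pmf \<Rightarrow> real" where
  "reliability_bound PS W J = ent (map_pmf (\<lambda>c. (sY1 c, sS1 c)) J) - measure_pmf.expectation J (\<lambda>c. obs_ent PS W (sA c) (sX c))"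

definition letter_bayes_risk ::
  "('a \<Rightarrow> ('s1 \<times> 's2) pmf) \<Rightarrow> ('s1 \<Rightarrow> 's2 \<Rightarrow> 'x \<Rightarrow> ('y1 \<times> 'y2) pmf)
    \<Rightarrow> ('s1 \<times> 's2 \<Rightarrow> 's::finite)
    \<Rightarrow> ('s \<Rightarrow> 'e::finite \<Rightarrow> real) \<Rightarrow> ('a,'x,'s1,'s2,'y1,'y2) sym \<Rightarrow> real" where
  "letter_bayes_risk PS W G d c = bayes_risk (map_pmf G (posterior (channel_law PS W (sA c) (sX c)) (sY1 c, sY2 c))) d"

context
  fixes PS :: "'a::finite \<Rightarrow> ('s1::finite \<times> 's2::finite) pmf"
    and W :: "'s1 \<Rightarrow> 's2 \<Rightarrow> 'x::finite \<Rightarrow> ('y1::finite \<times> 'y2::finite) pmf"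
begin

lemma cent_S1_joint1:
  "cent (map_pmf (\<lambda>c. (sS1 c, (sY1 c, sY2 c, sS2 c, sX c, sA c))) (joint1 PS W P))
   = measure_pmf.expectation (joint1 PS W P) (\<lambda>c. residual_state_ent PS W (sA c) (sX c) (sY1 c) (sY2 c) (sS2 c))"
proof -
  have "has_cond_distr (map_pmf (\<lambda>(v, u). ((\<lambda>((ax, y), s2). (fst y, snd y, s2, snd ax, fst ax)) v, u))
     (map_pmf (\<lambda>(v, u1, u2). ((v, u2), u1)) (map_pmf (\<lambda>c. (((sA c, sX c), sY1 c, sY2 c), sS1 c, sS2 c)) (joint1 PS W P))))
     (\<lambda>(y1, y2, s2, x, a). posterior (posterior (channel_law PS W a x) (y1, y2)) s2)"
    by (rule has_cond_distr_map_fst[OF has_cond_distr_posterior[OF has_cond_distr_joint1_states]])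
       (auto simp: split_beta)
  then have "has_cond_distr (map_pmf (\<lambda>c. ((sY1 c, sY2 c, sS2 c, sX c, sA c), sS1 c)) (joint1 PS W P))
      (\<lambda>(y1, y2, s2, x, a). posterior (posterior (channel_law PS W a x) (y1, y2)) s2)"
    by (simp add: map_pmf_comp split_beta case_prod_beta')
  from cond_ent_eq_expectation[OF this finite]
  show ?thesis
    unfolding cent_def by (simp add: map_pmf_comp residual_state_ent_def)
qed

lemma secrecy_bound_eq:
  "cent (map_pmf (\<lambda>c. ((sY1 c, sS1 c), (sY2 c, sS2 c))) (joint1 PS W P))
    - cent (map_pmf (\<lambda>c. (sS1 c, (sY1 c, sY2 c, sS2 c, sX c, sA c))) (joint1 PS W P)) = secrecy_bound PS W (joint1 PS W P)"
  unfolding secrecy_bound_def cent_S1_joint1 by (simp add: cent_def map_pmf_comp)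

lemma reliability_bound_eq:
  "minf (map_pmf (\<lambda>c. ((sX c, sA c), (sY1 c, sS1 c))) (joint1 PS W P)) = reliability_bound PS W (joint1 PS W P)"
proof -
  let ?D = "map_pmf (\<lambda>c. ((sX c, sA c), (sY1 c, sS1 c))) (joint1 PS W P)"
  have "has_cond_distr (map_pmf (\<lambda>(v, u). ((\<lambda>(a, x). (x, a)) v, u))
      (map_pmf (\<lambda>(v, u). (v, (\<lambda>(s, y). (fst y, fst s)) u))
        (map_pmf (\<lambda>c. ((sA c, sX c), ((sS1 c, sS2 c), (sY1 c, sY2 c)))) (joint1 PS W P))))
      (\<lambda>(x, a). map_pmf (\<lambda>(s, y). (fst y, fst s)) (channel_law PS W a x))"
    by (rule has_cond_distr_map_fst[OF has_cond_distr_map_snd[OF has_cond_distr_joint1]]) auto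
  then have kf: "has_cond_distr ?D (\<lambda>(x, a). map_pmf (\<lambda>(s, y). (fst y, fst s)) (channel_law PS W a x))"
    by (simp add: map_pmf_comp split_beta)
  have "ent ?D - ent (map_pmf fst ?D) = measure_pmf.expectation (map_pmf fst ?D)
      (\<lambda>v. ent ((\<lambda>(x, a). map_pmf (\<lambda>(s, y). (fst y, fst s)) (channel_law PS W a x)) v))"
    by (rule cond_ent_has_cond_distr[OF kf]) simp
  then show ?thesis
    unfolding minf_def reliability_bound_def by (simp add: map_pmf_comp obs_ent_def)
qed

lemma expectation_bayes_est_joint1:
  fixes G :: "'s1 \<times> 's2 \<Rightarrow> 's::finite" and d :: "'s \<Rightarrow> 'e::finite \<Rightarrow> real"
  assumes "bayes_est (map_pmf (\<lambda>c. ((sA c, sX c, sY1 c, sY2 c), G (sS1 c, sS2 c))) (joint1 PS W P)) d e"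
  shows "measure_pmf.expectation (joint1 PS W P) (\<lambda>c. d (G (sS1 c, sS2 c)) (e (sA c, sX c, sY1 c, sY2 c)))
       = measure_pmf.expectation (joint1 PS W P) (letter_bayes_risk PS W G d)"
  using expectation_bayes_est[OF has_cond_distr_joint1_state_fun _ assms]
  unfolding letter_bayes_risk_def[abs_def] by (simp add: map_pmf_comp)

end

section \<open>Time sharing\<close>

lemma expectation_bind_pmf_finite:
  fixes F :: "'c::finite \<Rightarrow> real"
  assumes fin: "finite (set_pmf U)"
  shows "measure_pmf.expectation (bind_pmf U J) F = measure_pmf.expectation U (\<lambda>i. measure_pmf.expectation (J i) F)"
proof -
  have p: "pmf (bind_pmf U J) c = (\<Sum>i\<in>set_pmf U. pmf (J i) c * pmf U i)" for c
    unfolding pmf_bind by (subst integral_measure_pmf_real[where A="set_pmf U"]) (auto simp: fin)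
  have "measure_pmf.expectation (bind_pmf U J) F = (\<Sum>c\<in>UNIV. (\<Sum>i\<in>set_pmf U. pmf (J i) c * pmf U i) * F c)"
    by (simp add: expectation_finite_type p)
  also have "\<dots> = (\<Sum>i\<in>set_pmf U. pmf U i * (\<Sum>c\<in>UNIV. pmf (J i) c * F c))"
    by (simp add: sum_distrib_left sum_distrib_right sum.swap[of _ "set_pmf U"] mult.commute mult.left_commute)
  also have "\<dots> = measure_pmf.expectation U (\<lambda>i. measure_pmf.expectation (J i) F)"
    by (simp add: expectation_finite_support[OF fin] expectation_finite_type)
  finally show ?thesis .
qed

lemma expectation_diff_finite:
  fixes A B :: "'i \<Rightarrow> real"
  assumes "finite (set_pmf U)"
  shows "measure_pmf.expectation U (\<lambda>i. A i - B i) = measure_pmf.expectation U A - measure_pmf.expectation U B"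
  using assms by (simp add: expectation_finite_support sum_subtractf right_diff_distrib)

lemma ent_indexed_mixture:
  fixes X :: "'c::finite \<Rightarrow> 'z"
  assumes fin: "finite (set_pmf U)"
  shows "ent (bind_pmf U (\<lambda>i. map_pmf (\<lambda>c. (i, X c)) (J i)))
       = ent U + measure_pmf.expectation U (\<lambda>i. ent (map_pmf X (J i)))"
proof -
  let ?D = "bind_pmf U (\<lambda>i. map_pmf (\<lambda>c. (i, X c)) (J i))"
  have fst_D: "map_pmf fst ?D = U"
    by (simp add: map_bind_pmf map_pmf_comp bind_pmf_const map_pmf_def[symmetric])
  then have "has_cond_distr ?D (\<lambda>i. map_pmf X (J i))"
    unfolding has_cond_distr_def by (simp add: map_pmf_comp)
  moreover have "finite (set_pmf ?D)"
  proof (rule finite_subset)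
    show "set_pmf ?D \<subseteq> (\<lambda>(i, c). (i, X c)) ` (set_pmf U \<times> UNIV)"
      by auto
  qed (use fin in simp)
  ultimately show ?thesis
    using cond_ent_has_cond_distr[of ?D] unfolding fst_D by fastforce
qed

lemma cond_ent_mixture_ge:
  fixes U :: "'c::finite \<Rightarrow> 'u" and V :: "'c \<Rightarrow> 'v"
  assumes fin: "finite (set_pmf T)"
  shows "measure_pmf.expectation T (\<lambda>i. ent (map_pmf (\<lambda>c. (U c, V c)) (J i)) - ent (map_pmf V (J i)))
     \<le> ent (map_pmf (\<lambda>c. (U c, V c)) (bind_pmf T J)) - ent (map_pmf V (bind_pmf T J))"
proof -
  define D where "D = bind_pmf T (\<lambda>i. map_pmf (Pair i) (J i))"
  have finD: "finite (set_pmf D)"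
    using fin unfolding D_def by (auto intro: finite_subset[of _ "set_pmf T \<times> UNIV"])
  have ent_snd: "ent (map_pmf (\<lambda>w. X (snd w)) D) = ent (map_pmf X (bind_pmf T J))" for X :: "'c \<Rightarrow> 'z"
    unfolding D_def by (simp add: map_bind_pmf map_pmf_comp bind_map_pmf map_pmf_def[symmetric])
  have ent_indexed: "ent (map_pmf (\<lambda>w. (fst w, X (snd w))) D)
      = ent T + measure_pmf.expectation T (\<lambda>i. ent (map_pmf X (J i)))" for X :: "'c \<Rightarrow> 'z"
    using ent_indexed_mixture[OF fin, of X J] unfolding D_def by (simp add: map_bind_pmf map_pmf_comp)
  have "ent (map_pmf (\<lambda>w. (U (snd w), (fst w, V (snd w)))) D) - ent (map_pmf (\<lambda>w. (fst w, V (snd w))) D)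
      \<le> ent (map_pmf (\<lambda>w. (U (snd w), V (snd w))) D) - ent (map_pmf (\<lambda>w. V (snd w)) D)"
    by (rule cond_ent_le_of_function[OF finD, where \<psi>=snd]) simp
  moreover have "ent (map_pmf (\<lambda>w. (U (snd w), (fst w, V (snd w)))) D)
      = ent (map_pmf (\<lambda>w. (fst w, (\<lambda>c. (U c, V c)) (snd w))) D)"
    by (rule ent_map_eq_of_functions[OF finD, where \<phi>="\<lambda>(i, u, v). (u, i, v)" and \<psi>="\<lambda>(u, i, v). (i, u, v)"]) auto
  moreover have "measure_pmf.expectation T (\<lambda>i. ent (map_pmf (\<lambda>c. (U c, V c)) (J i)) - ent (map_pmf V (J i)))
     = measure_pmf.expectation T (\<lambda>i. ent (map_pmf (\<lambda>c. (U c, V c)) (J i)))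
       - measure_pmf.expectation T (\<lambda>i. ent (map_pmf V (J i)))"
    by (rule expectation_diff_finite[OF fin])
  ultimately show ?thesis
    using ent_indexed[of "\<lambda>c. (U c, V c)"] ent_indexed[of V] ent_snd[of "\<lambda>c. (U c, V c)"] ent_snd[of V]
    by linarith
qed

context
  fixes PS :: "'a::finite \<Rightarrow> ('s1::finite \<times> 's2::finite) pmf"
    and W :: "'s1 \<Rightarrow> 's2 \<Rightarrow> 'x::finite \<Rightarrow> ('y1::finite \<times> 'y2::finite) pmf"
    and T :: "'i pmf" and J :: "'i \<Rightarrow> ('a,'x,'s1,'s2,'y1,'y2) sym pmf"
  assumes fin: "finite (set_pmf T)"
begin

lemma secrecy_bound_mixture:
  "measure_pmf.expectation T (\<lambda>i. secrecy_bound PS W (J i)) \<le> secrecy_bound PS W (bind_pmf T J)"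
  using cond_ent_mixture_ge[OF fin, where U="\<lambda>c. (sY1 c, sS1 c)" and V="\<lambda>c. (sY2 c, sS2 c)" and J=J]
    expectation_bind_pmf_finite[OF fin, where J=J and F="\<lambda>c. residual_state_ent PS W (sA c) (sX c) (sY1 c) (sY2 c) (sS2 c)"]
  unfolding secrecy_bound_def by (simp add: expectation_diff_finite[OF fin])

lemma reliability_bound_mixture:
  "measure_pmf.expectation T (\<lambda>i. reliability_bound PS W (J i)) \<le> reliability_bound PS W (bind_pmf T J)"
proof -
  have "ent (map_pmf (\<lambda>c. ((sY1 c, sS1 c), ())) X) = ent (map_pmf (\<lambda>c. (sY1 c, sS1 c)) X)"
    for X :: "('a,'x,'s1,'s2,'y1,'y2) sym pmf"
    using ent_map_inj[of "\<lambda>y. (y, ())" "map_pmf (\<lambda>c. (sY1 c, sS1 c)) X"] by (simp add: inj_on_def map_pmf_comp)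
  then show ?thesis
    using cond_ent_mixture_ge[OF fin, where U="\<lambda>c. (sY1 c, sS1 c)" and V="\<lambda>c. ()" and J=J]
      expectation_bind_pmf_finite[OF fin, where J=J and F="\<lambda>c. obs_ent PS W (sA c) (sX c)"]
    unfolding reliability_bound_def by (simp add: expectation_diff_finite[OF fin])
qed

end

section \<open>Continuity and compactness\<close>

lemma continuous_on_x_log2_x: "continuous_on {0..} (\<lambda>x::real. x * log 2 x)"
  unfolding continuous_on_def
proof (intro ballI)
  fix x :: real assume x: "x \<in> {0..}"
  show "((\<lambda>x. x * log 2 x) \<longlongrightarrow> x * log 2 x) (at x within {0..})"
  proof (cases "x = 0")
    case True
    have "((\<lambda>x::real. x * log 2 x) \<longlongrightarrow> 0) (at_right 0)"
      unfolding log_def by real_asymp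
    then show ?thesis
      using True by (simp add: at_within_Ici_at_right)
  next
    case False
    then have "((\<lambda>x. x * log 2 x) \<longlongrightarrow> x * log 2 x) (at x)"
      using x by (intro tendsto_intros) auto
    then show ?thesis
      by (rule tendsto_within_subset) simp
  qed
qed

lemma tendsto_ent:
  fixes p :: "nat \<Rightarrow> 'v::finite pmf"
  assumes "\<And>v. (\<lambda>N. pmf (p N) v) \<longlonglongrightarrow> pmf q v"
  shows "(\<lambda>N. ent (p N)) \<longlonglongrightarrow> ent q"
proof -
  have "(\<lambda>N. pmf (p N) v * log 2 (pmf (p N) v)) \<longlonglongrightarrow> pmf q v * log 2 (pmf q v)" for v
    using continuous_on_tendsto_compose[OF continuous_on_x_log2_x assms[of v]] by simp
  then show ?thesis
    unfolding ent_finite_type by (intro tendsto_minus tendsto_sum)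
qed

lemma tendsto_binary_entropy_0:
  assumes p: "p \<longlonglongrightarrow> 0" and p0: "\<And>N. 0 \<le> p N" and p1: "\<And>N. p N \<le> 1"
  shows "(\<lambda>N. binary_entropy (p N)) \<longlonglongrightarrow> 0"
proof -
  have "(\<lambda>N. p N * log 2 (p N)) \<longlonglongrightarrow> 0 * log 2 0"
    by (rule continuous_on_tendsto_compose[OF continuous_on_x_log2_x p]) (auto simp: p0)
  moreover have "(\<lambda>N. (1 - p N) * log 2 (1 - p N)) \<longlonglongrightarrow> 1 * log 2 1"
    using p p1 by (intro continuous_on_tendsto_compose[OF continuous_on_x_log2_x]) (auto intro: tendsto_eq_intros)
  ultimately have "(\<lambda>N. binary_entropy (p N)) \<longlonglongrightarrow> - (0 * log 2 0 + 1 * log 2 1)"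
    unfolding binary_entropy_def by (intro tendsto_minus tendsto_add)
  then show ?thesis
    by simp
qed

lemma pmf_bind_finite_type:
  fixes P :: "'b::finite pmf"
  shows "pmf (bind_pmf P N) v = (\<Sum>x\<in>UNIV. pmf P x * pmf (N x) v)"
  unfolding pmf_bind by (subst integral_measure_pmf_real[where A=UNIV]) (auto simp: mult.commute)

context
  fixes PS :: "'a::finite \<Rightarrow> ('s1::finite \<times> 's2::finite) pmf"
    and W :: "'s1 \<Rightarrow> 's2 \<Rightarrow> 'x::finite \<Rightarrow> ('y1::finite \<times> 'y2::finite) pmf"
    and P :: "nat \<Rightarrow> ('a \<times> 'x) pmf" and Q :: "('a \<times> 'x) pmf"
  assumes conv: "\<And>ax. (\<lambda>N. pmf (P N) ax) \<longlonglongrightarrow> pmf Q ax"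
begin

lemma tendsto_pmf_map_joint1:
  "(\<lambda>N. pmf (map_pmf F (joint1 PS W (P N))) v) \<longlonglongrightarrow> pmf (map_pmf F (joint1 PS W Q)) v"
proof -
  define c where "c ax = pmf (map_pmf F (joint1 PS W (return_pmf ax))) v" for ax
  have "pmf (map_pmf F (joint1 PS W R)) v = (\<Sum>ax\<in>UNIV. pmf R ax * c ax)" for R
    using joint1_bind_pmf[of PS W R return_pmf]
    by (simp add: c_def bind_return_pmf' map_bind_pmf pmf_bind_finite_type)
  then show ?thesis
    by (simp only:) (intro tendsto_sum tendsto_mult_right conv)
qed

lemma tendsto_ent_map_joint1:
  fixes F :: "('a,'x,'s1,'s2,'y1,'y2) sym \<Rightarrow> 'v::finite"
  shows "(\<lambda>N. ent (map_pmf F (joint1 PS W (P N)))) \<longlonglongrightarrow> ent (map_pmf F (joint1 PS W Q))"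
  by (rule tendsto_ent) (rule tendsto_pmf_map_joint1)

lemma tendsto_expectation_joint1:
  fixes f :: "('a,'x,'s1,'s2,'y1,'y2) sym \<Rightarrow> real"
  shows "(\<lambda>N. measure_pmf.expectation (joint1 PS W (P N)) f) \<longlonglongrightarrow> measure_pmf.expectation (joint1 PS W Q) f"
proof -
  have "(\<lambda>N. pmf (joint1 PS W (P N)) c) \<longlonglongrightarrow> pmf (joint1 PS W Q) c" for c
    using tendsto_pmf_map_joint1[of "\<lambda>x. x" c] by simp
  then show ?thesis
    unfolding expectation_finite_type by (intro tendsto_sum tendsto_mult_right) blast
qed

lemma tendsto_secrecy_bound:
  "(\<lambda>N. secrecy_bound PS W (joint1 PS W (P N))) \<longlonglongrightarrow> secrecy_bound PS W (joint1 PS W Q)"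
  unfolding secrecy_bound_def by (intro tendsto_diff tendsto_ent_map_joint1 tendsto_expectation_joint1)

lemma tendsto_reliability_bound:
  "(\<lambda>N. reliability_bound PS W (joint1 PS W (P N))) \<longlonglongrightarrow> reliability_bound PS W (joint1 PS W Q)"
  unfolding reliability_bound_def by (intro tendsto_diff tendsto_ent_map_joint1 tendsto_expectation_joint1)

end

lemma pmf_of_pointwise_limit:
  fixes P :: "nat \<Rightarrow> 'b::finite pmf"
  assumes lim: "\<And>b. (\<lambda>N. pmf (P N) b) \<longlonglongrightarrow> l b"
  shows "\<exists>Q. \<forall>b. pmf Q b = l b"
proof -
  have nonneg: "0 \<le> l b" for b
    by (rule LIMSEQ_le_const[OF lim]) simp
  have "(\<lambda>N. \<Sum>b\<in>UNIV. pmf (P N) b) \<longlonglongrightarrow> (\<Sum>b\<in>UNIV. l b)"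
    by (intro tendsto_sum lim)
  moreover have "(\<Sum>b\<in>UNIV. pmf (P N) b) = 1" for N
    using sum_pmf_eq_1[of UNIV "P N"] by simp
  ultimately have "(\<Sum>b\<in>UNIV. l b) = 1"
    by (simp add: LIMSEQ_const_iff)
  then have "(\<integral>\<^sup>+ b. ennreal (l b) \<partial>count_space UNIV) = 1"
    using nonneg by (simp add: nn_integral_count_space_finite sum_ennreal)
  then have "pmf (embed_pmf l) b = l b" for b
    by (rule pmf_embed_pmf[OF nonneg])
  then show ?thesis
    by blast
qed

lemma pmf_convergent_subseq:
  fixes P :: "nat \<Rightarrow> 'b::finite pmf"
  shows "\<exists>r Q. strict_mono r \<and> (\<forall>b. (\<lambda>N. pmf (P (r N)) b) \<longlonglongrightarrow> pmf Q b)"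
proof -
  define v where "v N = (\<chi> b. pmf (P N) b)" for N
  have "range v \<subseteq> cbox 0 (\<chi> b. 1)"
    unfolding v_def by (auto simp: mem_box_cart pmf_le_1)
  then have "bounded (range v)"
    using bounded_cbox bounded_subset by blast
  then obtain l r where r: "strict_mono r" and "(v \<circ> r) \<longlonglongrightarrow> l"
    using bounded_imp_convergent_subsequence by blast
  then have lim: "(\<lambda>N. pmf (P (r N)) b) \<longlonglongrightarrow> l $ b" for b
    using tendsto_vec_nth[of "v \<circ> r" l] by (simp add: v_def o_def)
  moreover obtain Q where "\<forall>b. pmf Q b = l $ b"
    using pmf_of_pointwise_limit[OF lim] by blast
  ultimately show ?thesis
    using r by (intro exI[of _ r] exI[of _ Q]) simp
qed

section \<open>Codes with actions and feedback\<close>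

type_synonym ('a,'x,'s1,'s2,'y1,'y2) trajectory = "('a,'x,'s1,'s2,'y1,'y2) sym list"

text \<open>(message, encoder randomness, trajectory), as drawn by code_dist\<close>
type_synonym ('a,'x,'s1,'s2,'y1,'y2) code_outcome = "nat \<times> nat \<times> ('a,'x,'s1,'s2,'y1,'y2) trajectory"

definition feedback :: "('a,'x,'s1,'s2,'y1,'y2) trajectory \<Rightarrow> ('y1 \<times> 'y2) list" where
  "feedback h = map (\<lambda>c. (sY1 c, sY2 c)) h"

definition code_letter ::
  "('a \<Rightarrow> ('s1 \<times> 's2) pmf) \<Rightarrow> ('s1 \<Rightarrow> 's2 \<Rightarrow> 'x \<Rightarrow> ('y1 \<times> 'y2) pmf)
   \<Rightarrow> (nat \<Rightarrow> ('y1 \<times> 'y2) list \<Rightarrow> nat \<Rightarrow> 'a) \<Rightarrow> (nat \<Rightarrow> 'a \<Rightarrow> ('y1 \<times> 'y2) list \<Rightarrow> nat \<Rightarrow> 'x)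
   \<Rightarrow> nat \<Rightarrow> nat \<Rightarrow> ('y1 \<times> 'y2) list \<Rightarrow> ('a,'x,'s1,'s2,'y1,'y2) sym pmf" where
  "code_letter PS W f g m t zs =
     map_pmf (mk_sym (f m zs t) (g m (f m zs t) zs t)) (channel_law PS W (f m zs t) (g m (f m zs t) zs t))"

lemma traj_step_eq: "traj_step PS W f g m t h = map_pmf (\<lambda>c. h @ [c]) (code_letter PS W f g m t (feedback h))"
  unfolding traj_step_def code_letter_def channel_law_def feedback_def Let_def
  by (simp add: map_bind_pmf map_pmf_comp mk_sym_def map_pmf_def bind_assoc_pmf bind_return_pmf)

lemma code_dist_bind:
  "code_dist PS W n K PT f g
     = bind_pmf (pmf_of_set {..<K}) (\<lambda>m. bind_pmf PT (\<lambda>t. map_pmf (\<lambda>h. (m, t, h)) (traj PS W f g m t n)))"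
  unfolding code_dist_def by (simp add: map_pmf_def)

lemma code_dist_Suc: "code_dist PS W (Suc n) K PT f g =
   bind_pmf (code_dist PS W n K PT f g) (\<lambda>(m, t, h). map_pmf (\<lambda>c. (m, t, h @ [c])) (code_letter PS W f g m t (feedback h)))"
  unfolding code_dist_bind by (simp add: traj_step_eq bind_assoc_pmf map_bind_pmf bind_map_pmf map_pmf_comp)

lemma length_traj: "h \<in> set_pmf (traj PS W f g m t n) \<Longrightarrow> length h = n"
proof (induction n arbitrary: h)
  case 0
  then show ?case by simp
next
  case (Suc n)
  then show ?case by (auto simp: traj_step_eq)
qed

lemma length_code_dist: "(m, t, h) \<in> set_pmf (code_dist PS W n K PT f g) \<Longrightarrow> length h = n"
  unfolding code_dist_bind by (auto dest: length_traj)

lemma msg_lt_code_dist: "K > 0 \<Longrightarrow> (m, t, h) \<in> set_pmf (code_dist PS W n K PT f g) \<Longrightarrow> m < K"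
  unfolding code_dist_bind by (auto simp: set_pmf_of_set lessThan_empty_iff)

lemma code_dist_take:
  assumes "k \<le> n"
  shows "map_pmf (\<lambda>(m, t, h). (m, t, take k h)) (code_dist PS W n K PT f g) = code_dist PS W k K PT f g"
  using assms
proof (induction n)
  case 0
  then show ?case using length_code_dist[of _ _ _ PS W 0 K PT f g]
    by (auto intro!: map_pmf_idI)
next
  case (Suc n)
  show ?case
  proof (cases "k = Suc n")
    case True
    then show ?thesis using length_code_dist[of _ _ _ PS W "Suc n" K PT f g]
      by (auto intro!: map_pmf_idI)
  next
    case False
    then have kn: "k \<le> n" using Suc.prems by simp
    have "map_pmf (\<lambda>(m, t, h). (m, t, take k h)) (code_dist PS W (Suc n) K PT f g)
       = bind_pmf (code_dist PS W n K PT f g) (\<lambda>(m, t, h). return_pmf (m, t, take k h))"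
      unfolding code_dist_Suc map_bind_pmf
    proof (intro bind_pmf_cong refl)
      fix w assume w: "w \<in> set_pmf (code_dist PS W n K PT f g)"
      obtain m t h where mth: "w = (m, t, h)" by (cases w) auto
      have "length h = n" using w mth length_code_dist by blast
      then show "map_pmf (\<lambda>(m, t, h). (m, t, take k h)) ((\<lambda>(m, t, h). map_pmf (\<lambda>c. (m, t, h @ [c])) (code_letter PS W f g m t (feedback h))) w)
          = (\<lambda>(m, t, h). return_pmf (m, t, take k h)) w"
        using kn by (simp add: mth map_pmf_comp map_pmf_const)
    qed
    also have "\<dots> = map_pmf (\<lambda>(m, t, h). (m, t, take k h)) (code_dist PS W n K PT f g)"
      by (simp add: map_pmf_def split_beta case_prod_beta')
    also have "\<dots> = code_dist PS W k K PT f g" using Suc.IH[OF kn] .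
    finally show ?thesis .
  qed
qed

definition past_and_input :: "nat \<Rightarrow> ('a,'x,'s1,'s2,'y1,'y2) code_outcome
    \<Rightarrow> ('a,'x,'s1,'s2,'y1,'y2) code_outcome \<times> ('a \<times> 'x)" where
  "past_and_input i = (\<lambda>(m, t, h). ((m, t, take i h), (sA (h ! i), sX (h ! i))))"

definition letter_outcome :: "nat \<Rightarrow> ('a,'x,'s1,'s2,'y1,'y2) code_outcome \<Rightarrow> ('s1 \<times> 's2) \<times> ('y1 \<times> 'y2)" where
  "letter_outcome i = (\<lambda>(m, t, h). ((sS1 (h ! i), sS2 (h ! i)), (sY1 (h ! i), sY2 (h ! i))))"

lemma has_cond_distr_code_letter:
  fixes PS :: "'a \<Rightarrow> ('s1 \<times> 's2) pmf" and W :: "'s1 \<Rightarrow> 's2 \<Rightarrow> 'x \<Rightarrow> ('y1 \<times> 'y2) pmf"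
    and f :: "nat \<Rightarrow> ('y1 \<times> 'y2) list \<Rightarrow> nat \<Rightarrow> 'a"
    and g :: "nat \<Rightarrow> 'a \<Rightarrow> ('y1 \<times> 'y2) list \<Rightarrow> nat \<Rightarrow> 'x"
  assumes "i < n"
  shows "has_cond_distr (map_pmf (\<lambda>w. (past_and_input i w, letter_outcome i w)) (code_dist PS W n K PT f g))
           (\<lambda>(z, (a, x)). channel_law PS W a x)"
proof -
  define a where "a z = f (fst z) (feedback (snd (snd z))) (fst (snd z))"
    for z :: "('a,'x,'s1,'s2,'y1,'y2) code_outcome"
  define x where "x z = g (fst z) (a z) (feedback (snd (snd z))) (fst (snd z))" for z
  have "map_pmf (\<lambda>w. (past_and_input i w, letter_outcome i w)) (code_dist PS W n K PT f g)
      = map_pmf (\<lambda>w. (past_and_input i w, letter_outcome i w)) (map_pmf (\<lambda>(m, t, h). (m, t, take (Suc i) h)) (code_dist PS W n K PT f g))"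
    unfolding map_pmf_comp
    apply (intro map_pmf_cong refl)
    subgoal for w
      using assms by (cases w rule: prod_cases3) (auto simp: past_and_input_def letter_outcome_def dest!: length_code_dist)
    done
  also have "\<dots> = map_pmf (\<lambda>w. (past_and_input i w, letter_outcome i w)) (code_dist PS W (Suc i) K PT f g)"
    using assms by (subst code_dist_take) auto
  also have "\<dots> = bind_pmf (code_dist PS W i K PT f g) (\<lambda>z. map_pmf (\<lambda>(v, u). ((z, v), u))
        (map_pmf (Pair (a z, x z)) (channel_law PS W (a z) (x z))))"
    unfolding code_dist_Suc map_bind_pmf
    apply (intro bind_pmf_cong refl)
    subgoal for w
      by (cases w rule: prod_cases3)
         (auto simp: code_letter_def a_def x_def map_pmf_comp past_and_input_def letter_outcome_def dest!: length_code_dist)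
    done
  also have "has_cond_distr \<dots> (\<lambda>(z, (a, x)). channel_law PS W a x)"
    by (intro has_cond_distr_bind has_cond_distr_Pair) simp
  finally show ?thesis .
qed

definition state_context :: "nat \<Rightarrow> ('a,'x,'s1,'s2,'y1,'y2) code_outcome
    \<Rightarrow> ('a,'x,'s1,'s2,'y1,'y2) code_outcome \<times> ('a \<times> 'x \<times> 'y1 \<times> 'y2) \<times> ('a,'x,'s1,'s2,'y1,'y2) trajectory" where
  "state_context i = (\<lambda>(m, t, h). ((m, t, take i h), (sA (h ! i), sX (h ! i), sY1 (h ! i), sY2 (h ! i)), drop (Suc i) h))"

definition letter_state :: "nat \<Rightarrow> ('a,'x,'s1,'s2,'y1,'y2) code_outcome \<Rightarrow> 's1 \<times> 's2" where
  "letter_state i = (\<lambda>(m, t, h). (sS1 (h ! i), sS2 (h ! i)))"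

definition state_posterior :: "('a \<Rightarrow> ('s1 \<times> 's2) pmf) \<Rightarrow> ('s1 \<Rightarrow> 's2 \<Rightarrow> 'x \<Rightarrow> ('y1 \<times> 'y2) pmf)
    \<Rightarrow> ('a,'x,'s1,'s2,'y1,'y2) code_outcome \<times> ('a \<times> 'x \<times> 'y1 \<times> 'y2) \<times> ('a,'x,'s1,'s2,'y1,'y2) trajectory
    \<Rightarrow> ('s1 \<times> 's2) pmf" where
  "state_posterior PS W = (\<lambda>(_, (a, x, y1, y2), _). posterior (channel_law PS W a x) (y1, y2))"

definition context_feedback :: "('a,'x,'s1,'s2,'y1,'y2) code_outcome \<times> ('a \<times> 'x \<times> 'y1 \<times> 'y2)
    \<times> ('a,'x,'s1,'s2,'y1,'y2) trajectory \<Rightarrow> ('y1 \<times> 'y2) list" where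
  "context_feedback = (\<lambda>((m, t, p), (a, x, y1, y2), r). feedback p @ [(y1, y2)] @ feedback r)"

lemma feedback_eq_context_feedback:
  assumes "i < length h"
  shows "feedback h = context_feedback (state_context i (m, t, h))"
proof -
  have "h = take i h @ [h ! i] @ drop (Suc i) h" using assms by (simp add: id_take_nth_drop)
  then have "feedback h = feedback (take i h @ [h ! i] @ drop (Suc i) h)" by simp
  also have "\<dots> = context_feedback (state_context i (m, t, h))" by (simp add: feedback_def context_feedback_def state_context_def)
  finally show ?thesis .
qed

lemma has_cond_distr_posterior_step:
  "has_cond_distr (map_pmf (\<lambda>(v, u). ((case v of (_, y) \<Rightarrow> ((a, x, fst y, snd y), [])), u))
          (map_pmf (\<lambda>(v, (u1, u2)). ((v, u2), u1)) (map_pmf (Pair ()) (channel_law PS W a x))))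
        (\<lambda>v. state_posterior PS W (z, v))"
proof -
  have k0: "has_cond_distr (map_pmf (Pair ()) (channel_law PS W a x)) (\<lambda>_. channel_law PS W a x)"
    by (rule has_cond_distr_Pair) simp
  show ?thesis
    by (rule has_cond_distr_map_fst[OF has_cond_distr_posterior[OF k0]]) (auto simp: state_posterior_def)
qed

lemma has_cond_distr_code_state_first:
  fixes PS :: "'a \<Rightarrow> ('s1 \<times> 's2) pmf" and W :: "'s1 \<Rightarrow> 's2 \<Rightarrow> 'x \<Rightarrow> ('y1 \<times> 'y2) pmf"
    and f :: "nat \<Rightarrow> ('y1 \<times> 'y2) list \<Rightarrow> nat \<Rightarrow> 'a"
    and g :: "nat \<Rightarrow> 'a \<Rightarrow> ('y1 \<times> 'y2) list \<Rightarrow> nat \<Rightarrow> 'x"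
  shows "has_cond_distr (map_pmf (\<lambda>w. (state_context i w, letter_state i w)) (code_dist PS W (Suc i) K PT f g))
     (state_posterior PS W)"
proof -
  define a where "a z = f (fst z) (feedback (snd (snd z))) (fst (snd z))"
    for z :: "('a,'x,'s1,'s2,'y1,'y2) code_outcome"
  define x where "x z = g (fst z) (a z) (feedback (snd (snd z))) (fst (snd z))" for z
  have "map_pmf (\<lambda>w. (state_context i w, letter_state i w)) (code_dist PS W (Suc i) K PT f g)
     = bind_pmf (code_dist PS W i K PT f g) (\<lambda>z. map_pmf (\<lambda>(v, u). ((z, v), u))
        (map_pmf (\<lambda>(v, u). ((case v of (_, y) \<Rightarrow> ((a z, x z, fst y, snd y), [])), u))
          (map_pmf (\<lambda>(v, (u1, u2)). ((v, u2), u1)) (map_pmf (Pair ()) (channel_law PS W (a z) (x z))))))"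
    unfolding code_dist_Suc map_bind_pmf
    apply (intro bind_pmf_cong refl)
    subgoal for w
      by (cases w rule: prod_cases3)
         (auto simp: code_letter_def a_def x_def map_pmf_comp state_context_def letter_state_def split_beta
           dest!: length_code_dist)
    done
  also have "has_cond_distr \<dots> (state_posterior PS W)"
    by (intro has_cond_distr_bind has_cond_distr_posterior_step)
  finally show ?thesis .
qed

text \<open>Appending a letter keeps the posterior of the i-th state: the new action and input depend
  on the past only through the feedback, which is part of the conditioning context, and the new
  state and outputs are drawn afresh.\<close>
lemma has_cond_distr_code_state_Suc:
  assumes i_lt: "i < n"
    and IH: "has_cond_distr (map_pmf (\<lambda>w. (state_context i w, letter_state i w)) (code_dist PS W n K PT f g))
      (state_posterior PS W)"
  shows "has_cond_distr (map_pmf (\<lambda>w. (state_context i w, letter_state i w)) (code_dist PS W (Suc n) K PT f g))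
      (state_posterior PS W)"
proof -
  have "map_pmf (\<lambda>w. (state_context i w, letter_state i w)) (code_dist PS W (Suc n) K PT f g)
     = map_pmf (\<lambda>((v, c), u). (case v of (z, s, r) \<Rightarrow> (z, s, r @ [c]), u))
        (bind_pmf (map_pmf (\<lambda>w. (state_context i w, letter_state i w)) (code_dist PS W n K PT f g))
          (\<lambda>(v, u). map_pmf (\<lambda>c. ((v, c), u)) (case v of ((m, t, p), s, r) \<Rightarrow> code_letter PS W f g m t (context_feedback v))))"
    unfolding code_dist_Suc map_bind_pmf bind_map_pmf
    apply (intro bind_pmf_cong refl)
    subgoal premises prems for w
    proof (cases w rule: prod_cases3)
      case (fields m t h)
      have len: "length h = n" using prems fields length_code_dist by blast
      then have zs: "feedback h = context_feedback (state_context i (m, t, h))" using i_lt by (intro feedback_eq_context_feedback) simp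
      show ?thesis
        using len i_lt zs by (simp add: fields map_pmf_comp state_context_def letter_state_def nth_append)
    qed
    done
  also have "has_cond_distr \<dots> (state_posterior PS W)"
  proof -
    have eq: "(\<lambda>((v, c), u). (case v of (z, s, r) \<Rightarrow> (z, s, r @ [c]), u))
       = (\<lambda>(vc, u). ((\<lambda>(v, c). case v of (z, s, r) \<Rightarrow> (z, s, r @ [c])) vc, u))"
      by (auto simp: fun_eq_iff)
    show ?thesis unfolding eq
      by (rule has_cond_distr_map_fst[OF has_cond_distr_extend[OF IH]]) (auto simp: state_posterior_def split: prod.splits)
  qed
  finally show ?thesis .
qed

lemma has_cond_distr_code_state:
  assumes "i < n"
  shows "has_cond_distr (map_pmf (\<lambda>w. (state_context i w, letter_state i w)) (code_dist PS W n K PT f g))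
           (state_posterior PS W)"
proof -
  from assms have "Suc i \<le> n"
    by simp
  then show ?thesis
    by (induction n rule: dec_induct) (auto intro: has_cond_distr_code_state_first has_cond_distr_code_state_Suc)
qed

lemma zip_map_map: "zip (map a h) (map b h) = map (\<lambda>c. (a c, b c)) h"
  by (induction h) auto

lemma expectation_uniform:
  fixes h :: "nat \<Rightarrow> real"
  assumes "n > 0"
  shows "measure_pmf.expectation (pmf_of_set {..<n}) h = (\<Sum>i<n. h i) / n"
  using assms by (subst integral_pmf_of_set) (auto simp: lessThan_empty_iff)

context
  fixes PS :: "'a::finite \<Rightarrow> ('s1::finite \<times> 's2::finite) pmf"
    and W :: "'s1 \<Rightarrow> 's2 \<Rightarrow> 'x::finite \<Rightarrow> ('y1::finite \<times> 'y2::finite) pmf"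
    and f :: "nat \<Rightarrow> ('y1 \<times> 'y2) list \<Rightarrow> nat \<Rightarrow> 'a"
    and g :: "nat \<Rightarrow> 'a \<Rightarrow> ('y1 \<times> 'y2) list \<Rightarrow> nat \<Rightarrow> 'x"
    and K :: nat and PT :: "nat pmf" and n :: nat
    and dec :: "'y1 list \<Rightarrow> 's1 list \<Rightarrow> nat"
begin

definition msg_traj :: "(nat \<times> ('a,'x,'s1,'s2,'y1,'y2) trajectory) pmf" where
  "msg_traj = map_pmf (\<lambda>(m, t, h). (m, h)) (code_dist PS W n K PT f g)"
definition letter_input :: "nat \<Rightarrow> ('a \<times> 'x) pmf" where
  "letter_input i = map_pmf (\<lambda>(m, t, h). (sA (h ! i), sX (h ! i))) (code_dist PS W n K PT f g)"

lemma length_msg_traj: "w \<in> set_pmf msg_traj \<Longrightarrow> length (snd w) = n"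
  unfolding msg_traj_def by (auto dest: length_code_dist)

lemma msg_lt_msg_traj: "K > 0 \<Longrightarrow> w \<in> set_pmf msg_traj \<Longrightarrow> fst w < K"
  unfolding msg_traj_def by (auto dest: msg_lt_code_dist)

lemma map_pmf_nth_msg_traj:
  assumes "i < n"
  shows "map_pmf (\<lambda>w. snd w ! i) msg_traj = joint1 PS W (letter_input i)"
proof -
  note kf = has_cond_distr_code_letter[OF assms, where PS=PS and W=W and f=f and g=g and K=K and PT=PT]
  let ?D = "map_pmf (\<lambda>w. (past_and_input i w, letter_outcome i w)) (code_dist PS W n K PT f g)"
  have D: "?D = bind_pmf (map_pmf fst ?D) (\<lambda>v. map_pmf (Pair v) ((\<lambda>(z, (a, x)). channel_law PS W a x) v))"
    using kf unfolding has_cond_distr_def .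
  have "map_pmf (\<lambda>w. snd w ! i) msg_traj = map_pmf (\<lambda>(v, u). mk_sym (fst (snd v)) (snd (snd v)) u) ?D"
    unfolding msg_traj_def map_pmf_comp
    by (intro map_pmf_cong refl) (auto simp: past_and_input_def letter_outcome_def split_beta intro: mk_sym_sel_eq)
  also have "\<dots> = bind_pmf (map_pmf fst ?D) (\<lambda>v. map_pmf (mk_sym (fst (snd v)) (snd (snd v))) (channel_law PS W (fst (snd v)) (snd (snd v))))"
    by (subst D) (simp add: map_bind_pmf map_pmf_comp split_beta)
  also have "\<dots> = joint1 PS W (letter_input i)"
    unfolding joint1_eq letter_input_def by (simp add: map_pmf_comp bind_map_pmf past_and_input_def split_beta)
  finally show ?thesis .
qed

lemma has_cond_distr_msg_traj_letter:
  assumes "i < n"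
  shows "has_cond_distr (map_pmf (\<lambda>w. (((fst w, take i (snd w)), (sA (snd w ! i), sX (snd w ! i))),
      ((sS1 (snd w ! i), sS2 (snd w ! i)), (sY1 (snd w ! i), sY2 (snd w ! i))))) msg_traj) (\<lambda>(z, (a, x)). channel_law PS W a x)"
proof -
  have "has_cond_distr (map_pmf (\<lambda>(v, u). ((\<lambda>((m, t, p), ax). ((m, p), ax)) v, u)) (map_pmf (\<lambda>w. (past_and_input i w, letter_outcome i w)) (code_dist PS W n K PT f g)))
      (\<lambda>(z, (a, x)). channel_law PS W a x)"
    by (rule has_cond_distr_map_fst[OF has_cond_distr_code_letter[OF assms]]) auto
  then show ?thesis unfolding msg_traj_def by (simp add: map_pmf_comp past_and_input_def letter_outcome_def split_beta)
qed

lemma has_cond_distr_msg_traj_state: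
  assumes "i < n"
  shows "has_cond_distr (map_pmf (\<lambda>w. ((((fst w, take i (snd w)), (sA (snd w ! i), sX (snd w ! i), sY1 (snd w ! i), sY2 (snd w ! i)),
       drop (Suc i) (snd w)), sS2 (snd w ! i)), sS1 (snd w ! i))) msg_traj)
     (\<lambda>(v, s2). case v of (z, (a, x, y1, y2), r) \<Rightarrow> posterior (posterior (channel_law PS W a x) (y1, y2)) s2)"
proof -
  have "has_cond_distr (map_pmf (\<lambda>(v, u). ((\<lambda>(((m, t, p), st, r), s2). (((m, p), st, r), s2)) v, u))
      (map_pmf (\<lambda>(v, (u1, u2)). ((v, u2), u1)) (map_pmf (\<lambda>w. (state_context i w, letter_state i w)) (code_dist PS W n K PT f g))))
     (\<lambda>(v, s2). case v of (z, (a, x, y1, y2), r) \<Rightarrow> posterior (posterior (channel_law PS W a x) (y1, y2)) s2)"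
    by (rule has_cond_distr_map_fst[OF has_cond_distr_posterior[OF has_cond_distr_code_state[OF assms]]]) (auto simp: state_posterior_def split: prod.splits)
  then show ?thesis unfolding msg_traj_def by (simp add: map_pmf_comp state_context_def letter_state_def split_beta)
qed

lemma has_cond_distr_msg_traj_estimate:
  assumes "i < n"
  shows "has_cond_distr (map_pmf (\<lambda>w. ((map sX (snd w), map sA (snd w), map sY1 (snd w), map sY2 (snd w)), G (sS1 (snd w ! i), sS2 (snd w ! i)))) msg_traj)
     (\<lambda>(xs, as, y1s, y2s). map_pmf G (posterior (channel_law PS W (as ! i) (xs ! i)) (y1s ! i, y2s ! i)))"
proof -
  let ?\<psi> = "\<lambda>((m::nat, t::nat, p), (a, x, y1, y2), r). (map sX p @ [x] @ map sX r, map sA p @ [a] @ map sA r,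
       map sY1 p @ [y1] @ map sY1 r, map sY2 p @ [y2] @ map sY2 r)"
  have "has_cond_distr (map_pmf (\<lambda>(v, u). (?\<psi> v, u)) (map_pmf (\<lambda>(v, u). (v, G u)) (map_pmf (\<lambda>w. (state_context i w, letter_state i w)) (code_dist PS W n K PT f g))))
     (\<lambda>(xs, as, y1s, y2s). map_pmf G (posterior (channel_law PS W (as ! i) (xs ! i)) (y1s ! i, y2s ! i)))"
  proof (rule has_cond_distr_map_fst[OF has_cond_distr_map_snd[OF has_cond_distr_code_state[OF assms]]])
    fix v assume "v \<in> set_pmf (map_pmf fst (map_pmf (\<lambda>(v, u). (v, G u)) (map_pmf (\<lambda>w. (state_context i w, letter_state i w)) (code_dist PS W n K PT f g))))"
    then obtain m t h where v: "v = state_context i (m, t, h)" and mth: "(m, t, h) \<in> set_pmf (code_dist PS W n K PT f g)"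
      by (auto simp: map_pmf_comp)
    have "length h = n" using mth length_code_dist by blast
    then show "map_pmf G (state_posterior PS W v) = (\<lambda>(xs, as, y1s, y2s). map_pmf G (posterior (channel_law PS W (as ! i) (xs ! i)) (y1s ! i, y2s ! i))) (?\<psi> v)"
      using assms by (simp add: v state_context_def state_posterior_def nth_append min_def)
  qed
  moreover have "map_pmf (\<lambda>(v, u). (?\<psi> v, u)) (map_pmf (\<lambda>(v, u). (v, G u)) (map_pmf (\<lambda>w. (state_context i w, letter_state i w)) (code_dist PS W n K PT f g)))
     = map_pmf (\<lambda>w. ((map sX (snd w), map sA (snd w), map sY1 (snd w), map sY2 (snd w)), G (sS1 (snd w ! i), sS2 (snd w ! i)))) msg_traj"
    unfolding msg_traj_def map_pmf_comp
    apply (intro map_pmf_cong refl)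
    subgoal premises prems for w
    proof (cases w rule: prod_cases3)
      case (fields m t h)
      have "length h = n" using prems fields length_code_dist by blast
      then have h: "h = take i h @ [h ! i] @ drop (Suc i) h" using assms by (simp add: id_take_nth_drop)
      have e: "map F h = map F (take i h) @ [F (h ! i)] @ map F (drop (Suc i) h)" for F :: "_ \<Rightarrow> 'zz"
        by (subst h) simp
      show ?thesis
        by (simp add: fields state_context_def letter_state_def e[of sX] e[of sA] e[of sY1] e[of sY2])
    qed
    done
  ultimately show ?thesis by simp
qed

abbreviation letter_law :: "nat \<Rightarrow> ('a,'x,'s1,'s2,'y1,'y2) sym pmf" where
  "letter_law k \<equiv> joint1 PS W (letter_input k)"

abbreviation error_prob :: real where
  "error_prob \<equiv> measure_pmf.prob (code_dist PS W n K PT f g) {(m, tk, h). dec (map sY1 h) (map sS1 h) \<noteq> m}"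

abbreviation decoding_error :: "nat \<times> ('a,'x,'s1,'s2,'y1,'y2) trajectory \<Rightarrow> bool" where
  "decoding_error w \<equiv> dec (map sY1 (snd w)) (map sS1 (snd w)) \<noteq> fst w"

definition time_shared_input :: "('a \<times> 'x) pmf" where
  "time_shared_input = bind_pmf (pmf_of_set {..<n}) letter_input"

context
  assumes K: "K > 0"
begin

lemma finite_msg_traj: "finite (set_pmf msg_traj)"
proof -
  have "set_pmf msg_traj \<subseteq> {..<K} \<times> {h. length h = n}" using length_msg_traj msg_lt_msg_traj[OF K] by fastforce
  moreover have "finite ({..<K} \<times> {h :: ('a,'x,'s1,'s2,'y1,'y2) trajectory. length h = n})"
    using finite_lists_length_eq[of "UNIV :: ('a,'x,'s1,'s2,'y1,'y2) sym set" n]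
    by (intro finite_cartesian_product) auto
  ultimately show ?thesis using finite_subset by blast
qed

lemma expectation_nth_msg_traj:
  fixes F :: "_ \<Rightarrow> real"
  assumes "k < n"
  shows "measure_pmf.expectation msg_traj (\<lambda>w. F (snd w ! k)) = measure_pmf.expectation (letter_law k) F"
  unfolding map_pmf_nth_msg_traj[OF assms, symmetric] by simp

lemma ent_nth_msg_traj:
  assumes "k < n"
  shows "ent (map_pmf (\<lambda>w. F (snd w ! k)) msg_traj) = ent (map_pmf F (letter_law k))"
  unfolding map_pmf_nth_msg_traj[OF assms, symmetric] by (simp add: map_pmf_comp)

lemma cond_ent_state_ge:
  assumes k: "k < n"
  shows "ent (map_pmf (\<lambda>w. (sS1 (snd w ! k), (take k (map sS1 (snd w)), (fst w, map (\<lambda>c. (sY1 c, sY2 c, sS2 c)) (snd w))))) msg_traj)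
       - ent (map_pmf (\<lambda>w. (take k (map sS1 (snd w)), (fst w, map (\<lambda>c. (sY1 c, sY2 c, sS2 c)) (snd w)))) msg_traj)
     \<ge> measure_pmf.expectation (letter_law k) (\<lambda>c. residual_state_ent PS W (sA c) (sX c) (sY1 c) (sY2 c) (sS2 c))"
proof -
  define V where "V w = (((fst w, take k (snd w)), (sA (snd w ! k), sX (snd w ! k), sY1 (snd w ! k), sY2 (snd w ! k)),
       drop (Suc k) (snd w)), sS2 (snd w ! k))" for w :: "nat \<times> ('a,'x,'s1,'s2,'y1,'y2) trajectory"
  define U where "U w = sS1 (snd w ! k)" for w :: "nat \<times> ('a,'x,'s1,'s2,'y1,'y2) trajectory"
  let ?yy = "\<lambda>c. (sY1 c, sY2 c, sS2 c)"
  define \<psi> where "\<psi> = (\<lambda>(((m::nat, p::('a,'x,'s1,'s2,'y1,'y2) trajectory), (a::'a, x::'x, y1::'y1, y2::'y2), r::('a,'x,'s1,'s2,'y1,'y2) trajectory), s2::'s2). (map sS1 p, (m, map ?yy p @ [(y1, y2, s2)] @ map ?yy r)))"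
  have det: "(take k (map sS1 (snd w)), (fst w, map ?yy (snd w))) = \<psi> (V w)" if "w \<in> set_pmf msg_traj" for w
  proof -
    have "length (snd w) = n" using length_msg_traj[OF that] .
    then have h: "snd w = take k (snd w) @ [snd w ! k] @ drop (Suc k) (snd w)" using k by (simp add: id_take_nth_drop)
    have "map ?yy (snd w) = map ?yy (take k (snd w)) @ [?yy (snd w ! k)] @ map ?yy (drop (Suc k) (snd w))"
      by (subst h) simp
    then show ?thesis by (simp add: \<psi>_def V_def take_map)
  qed
  have cm: "ent (map_pmf (\<lambda>w. (U w, V w)) msg_traj) - ent (map_pmf V msg_traj)
      \<le> ent (map_pmf (\<lambda>w. (U w, (take k (map sS1 (snd w)), (fst w, map ?yy (snd w))))) msg_traj)
       - ent (map_pmf (\<lambda>w. (take k (map sS1 (snd w)), (fst w, map ?yy (snd w)))) msg_traj)"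
    by (rule cond_ent_le_of_function[OF finite_msg_traj]) (rule det)
  have "ent (map_pmf (\<lambda>w. (U w, V w)) msg_traj) - ent (map_pmf V msg_traj)
      = measure_pmf.expectation msg_traj
          (\<lambda>w. residual_state_ent PS W (sA (snd w ! k)) (sX (snd w ! k)) (sY1 (snd w ! k)) (sY2 (snd w ! k)) (sS2 (snd w ! k)))"
    using cond_ent_eq_expectation[OF has_cond_distr_msg_traj_state[OF k] finite_msg_traj]
    unfolding V_def U_def by (simp add: residual_state_ent_def)
  also have "\<dots> = measure_pmf.expectation (letter_law k) (\<lambda>c. residual_state_ent PS W (sA c) (sX c) (sY1 c) (sY2 c) (sS2 c))"
    by (rule expectation_nth_msg_traj[OF k])
  finally show ?thesis
    using cm unfolding U_def by linarith
qed

lemma cond_ent_letter_le: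
  assumes k: "k < n"
  shows "ent (map_pmf (\<lambda>w. (F1 (snd w ! k), (take k (map F1 (snd w)), map F2 (snd w)))) msg_traj)
       - ent (map_pmf (\<lambda>w. (take k (map F1 (snd w)), map F2 (snd w))) msg_traj)
     \<le> ent (map_pmf (\<lambda>w. (F1 (snd w ! k), F2 (snd w ! k))) msg_traj) - ent (map_pmf (\<lambda>w. F2 (snd w ! k)) msg_traj)"
  by (rule cond_ent_le_of_function[OF finite_msg_traj, where \<psi>="\<lambda>(p, b). b ! k"]) (use k length_msg_traj in auto)

lemma cond_ent_letter_le_ent:
  assumes k: "k < n"
  shows "ent (map_pmf (\<lambda>w. (F1 (snd w ! k), (take k (map F1 (snd w)), ()))) msg_traj)
       - ent (map_pmf (\<lambda>w. (take k (map F1 (snd w)), ())) msg_traj)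
     \<le> ent (map_pmf (\<lambda>w. F1 (snd w ! k)) msg_traj)"
proof -
  have "ent (map_pmf (\<lambda>w. (F1 (snd w ! k), (take k (map F1 (snd w)), ()))) msg_traj)
       - ent (map_pmf (\<lambda>w. (take k (map F1 (snd w)), ())) msg_traj)
     \<le> ent (map_pmf (\<lambda>w. (F1 (snd w ! k), ())) msg_traj) - ent (map_pmf (\<lambda>w. ()) msg_traj)"
    by (rule cond_ent_le_of_function[OF finite_msg_traj, where \<psi>="\<lambda>_. ()"]) simp
  moreover have "ent (map_pmf (\<lambda>w. (F1 (snd w ! k), ())) msg_traj) = ent (map_pmf (\<lambda>w. F1 (snd w ! k)) msg_traj)"
    by (rule ent_map_eq_of_functions[OF finite_msg_traj, where \<phi>="\<lambda>x. (x, ())" and \<psi>=fst]) auto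
  ultimately show ?thesis by simp
qed

lemma cond_ent_obs_ge:
  assumes k: "k < n"
  shows "ent (map_pmf (\<lambda>w. ((\<lambda>c. (sY1 c, sS1 c)) (snd w ! k), (take k (map (\<lambda>c. (sY1 c, sS1 c)) (snd w)), fst w))) msg_traj)
       - ent (map_pmf (\<lambda>w. (take k (map (\<lambda>c. (sY1 c, sS1 c)) (snd w)), fst w)) msg_traj)
     \<ge> measure_pmf.expectation (letter_law k) (\<lambda>c. obs_ent PS W (sA c) (sX c))"
proof -
  define V where "V w = ((fst w, take k (snd w)), (sA (snd w ! k), sX (snd w ! k)))" for w :: "nat \<times> ('a,'x,'s1,'s2,'y1,'y2) trajectory"
  define U where "U w = (sY1 (snd w ! k), sS1 (snd w ! k))" for w :: "nat \<times> ('a,'x,'s1,'s2,'y1,'y2) trajectory"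
  define \<psi> where "\<psi> = (\<lambda>((m::nat, p::('a,'x,'s1,'s2,'y1,'y2) trajectory), ax::'a \<times> 'x). (map (\<lambda>c. (sY1 c, sS1 c)) p, m))"
  have cm: "ent (map_pmf (\<lambda>w. (U w, V w)) msg_traj) - ent (map_pmf V msg_traj)
      \<le> ent (map_pmf (\<lambda>w. (U w, (take k (map (\<lambda>c. (sY1 c, sS1 c)) (snd w)), fst w))) msg_traj)
       - ent (map_pmf (\<lambda>w. (take k (map (\<lambda>c. (sY1 c, sS1 c)) (snd w)), fst w)) msg_traj)"
    by (rule cond_ent_le_of_function[OF finite_msg_traj, where \<psi>=\<psi>]) (simp add: \<psi>_def V_def take_map)
  have "has_cond_distr (map_pmf (\<lambda>w. (V w, U w)) msg_traj)
      (\<lambda>v. map_pmf (\<lambda>(s, y). (fst y, fst s)) (channel_law PS W (fst (snd v)) (snd (snd v))))"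
    using has_cond_distr_map_snd[OF has_cond_distr_msg_traj_letter[OF k], of "\<lambda>(s, y). (fst y, fst s)"]
    by (simp add: map_pmf_comp V_def U_def split_beta)
  from cond_ent_eq_expectation[OF this finite_msg_traj]
  have "ent (map_pmf (\<lambda>w. (U w, V w)) msg_traj) - ent (map_pmf V msg_traj)
      = measure_pmf.expectation msg_traj (\<lambda>w. obs_ent PS W (sA (snd w ! k)) (sX (snd w ! k)))"
    by (simp add: V_def[abs_def] obs_ent_def)
  also have "\<dots> = measure_pmf.expectation (letter_law k) (\<lambda>c. obs_ent PS W (sA c) (sX c))"
    by (rule expectation_nth_msg_traj[OF k])
  finally show ?thesis
    using cm unfolding U_def by simp
qed

lemma fano_msg_traj:
  "ent (map_pmf (\<lambda>w. (fst w, map (\<lambda>c. (sY1 c, sS1 c)) (snd w))) msg_traj) - ent (map_pmf (\<lambda>w. map (\<lambda>c. (sY1 c, sS1 c)) (snd w)) msg_traj)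
   \<le> ent (map_pmf decoding_error msg_traj) + measure_pmf.prob msg_traj {w. decoding_error w} * log 2 (real K)"
proof -
  have "ent (map_pmf (\<lambda>w. (fst w, map (\<lambda>c. (sY1 c, sS1 c)) (snd w))) msg_traj) - ent (map_pmf (\<lambda>w. map (\<lambda>c. (sY1 c, sS1 c)) (snd w)) msg_traj)
   \<le> ent (map_pmf (\<lambda>w. (\<lambda>l. dec (map fst l) (map snd l)) (map (\<lambda>c. (sY1 c, sS1 c)) (snd w)) \<noteq> fst w) msg_traj)
     + measure_pmf.prob msg_traj {w. (\<lambda>l. dec (map fst l) (map snd l)) (map (\<lambda>c. (sY1 c, sS1 c)) (snd w)) \<noteq> fst w} * log 2 (real K)"
    by (rule fano_inequality[OF finite_msg_traj]) (rule msg_lt_msg_traj[OF K])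
  then show ?thesis by (simp add: o_def)
qed

lemma msg_ent_le_reliability:
  "ent (map_pmf fst msg_traj)
   \<le> ent (map_pmf decoding_error msg_traj) + measure_pmf.prob msg_traj {w. decoding_error w} * log 2 (real K)
     + (\<Sum>k<n. reliability_bound PS W (letter_law k))"
proof -
  let ?F = "\<lambda>c. (sY1 c, sS1 c)"
  let ?L1 = "\<lambda>w. map ?F (snd w)"
  have t1: "ent (map_pmf (\<lambda>w. (?L1 w, ())) msg_traj) - ent (map_pmf (\<lambda>w. ()) msg_traj)
      = (\<Sum>k<n. ent (map_pmf (\<lambda>w. (?F (snd w ! k), (take k (?L1 w), ()))) msg_traj) - ent (map_pmf (\<lambda>w. (take k (?L1 w), ())) msg_traj))"
    by (rule ent_chain_rule_list[OF finite_msg_traj length_msg_traj])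
  also have "\<dots> \<le> (\<Sum>k<n. ent (map_pmf (\<lambda>w. ?F (snd w ! k)) msg_traj))"
    by (intro sum_mono cond_ent_letter_le_ent) simp
  also have "\<dots> = (\<Sum>k<n. ent (map_pmf ?F (letter_law k)))"
    by (intro sum.cong refl ent_nth_msg_traj) simp
  finally have a1: "ent (map_pmf (\<lambda>w. (?L1 w, ())) msg_traj) - ent (map_pmf (\<lambda>w. ()) msg_traj) \<le> (\<Sum>k<n. ent (map_pmf ?F (letter_law k)))" .
  have a1': "ent (map_pmf (\<lambda>w. (?L1 w, ())) msg_traj) = ent (map_pmf ?L1 msg_traj)"
    by (rule ent_map_eq_of_functions[OF finite_msg_traj, where \<phi>="\<lambda>x. (x, ())" and \<psi>=fst]) auto
  have t2: "ent (map_pmf (\<lambda>w. (?L1 w, fst w)) msg_traj) - ent (map_pmf fst msg_traj)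
      = (\<Sum>k<n. ent (map_pmf (\<lambda>w. (?F (snd w ! k), (take k (?L1 w), fst w))) msg_traj) - ent (map_pmf (\<lambda>w. (take k (?L1 w), fst w)) msg_traj))"
    by (rule ent_chain_rule_list[OF finite_msg_traj length_msg_traj])
  also have "\<dots> \<ge> (\<Sum>k<n. measure_pmf.expectation (letter_law k) (\<lambda>c. obs_ent PS W (sA c) (sX c)))"
    by (intro sum_mono cond_ent_obs_ge) simp
  finally have a2: "ent (map_pmf (\<lambda>w. (?L1 w, fst w)) msg_traj) - ent (map_pmf fst msg_traj) \<ge> (\<Sum>k<n. measure_pmf.expectation (letter_law k) (\<lambda>c. obs_ent PS W (sA c) (sX c)))" .
  have a2': "ent (map_pmf (\<lambda>w. (?L1 w, fst w)) msg_traj) = ent (map_pmf (\<lambda>w. (fst w, ?L1 w)) msg_traj)"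
    by (rule ent_map_eq_of_functions[OF finite_msg_traj, where \<phi>="\<lambda>(a, b). (b, a)" and \<psi>="\<lambda>(a, b). (b, a)"]) auto
  have G: "(\<Sum>k<n. reliability_bound PS W (letter_law k)) = (\<Sum>k<n. ent (map_pmf ?F (letter_law k))) - (\<Sum>k<n. measure_pmf.expectation (letter_law k) (\<lambda>c. obs_ent PS W (sA c) (sX c)))"
    unfolding reliability_bound_def by (simp add: sum_subtractf)
  show ?thesis using a1 a1' a2 a2' G fano_msg_traj by simp
qed

lemma cond_ent_obs_le_sum_letters:
  "ent (map_pmf (\<lambda>w. (map (\<lambda>c. (sY1 c, sS1 c)) (snd w), map (\<lambda>c. (sY2 c, sS2 c)) (snd w))) msg_traj)
     - ent (map_pmf (\<lambda>w. map (\<lambda>c. (sY2 c, sS2 c)) (snd w)) msg_traj)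
   \<le> (\<Sum>k<n. ent (map_pmf (\<lambda>c. ((sY1 c, sS1 c), (sY2 c, sS2 c))) (letter_law k))
            - ent (map_pmf (\<lambda>c. (sY2 c, sS2 c)) (letter_law k)))"
proof -
  let ?F1 = "\<lambda>c. (sY1 c, sS1 c)" and ?F2 = "\<lambda>c. (sY2 c, sS2 c)"
  let ?L1 = "\<lambda>w. map ?F1 (snd w)" and ?L2 = "\<lambda>w. map ?F2 (snd w)"
  have "ent (map_pmf (\<lambda>w. (?L1 w, ?L2 w)) msg_traj) - ent (map_pmf ?L2 msg_traj)
      = (\<Sum>k<n. ent (map_pmf (\<lambda>w. (?F1 (snd w ! k), (take k (?L1 w), ?L2 w))) msg_traj)
               - ent (map_pmf (\<lambda>w. (take k (?L1 w), ?L2 w)) msg_traj))"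
    by (rule ent_chain_rule_list[OF finite_msg_traj length_msg_traj])
  also have "\<dots> \<le> (\<Sum>k<n. ent (map_pmf (\<lambda>w. (?F1 (snd w ! k), ?F2 (snd w ! k))) msg_traj)
                          - ent (map_pmf (\<lambda>w. ?F2 (snd w ! k)) msg_traj))"
    by (intro sum_mono cond_ent_letter_le) simp
  also have "\<dots> = (\<Sum>k<n. ent (map_pmf (\<lambda>c. (?F1 c, ?F2 c)) (letter_law k)) - ent (map_pmf ?F2 (letter_law k)))"
    using ent_nth_msg_traj[where F="\<lambda>c. (?F1 c, ?F2 c)"] ent_nth_msg_traj[where F="?F2"]
    by (intro sum.cong refl) simp
  finally show ?thesis .
qed

lemma cond_ent_states_ge_sum_letters:
  "ent (map_pmf (\<lambda>w. (map sS1 (snd w), (fst w, map (\<lambda>c. (sY1 c, sY2 c, sS2 c)) (snd w)))) msg_traj)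
     - ent (map_pmf (\<lambda>w. (fst w, map (\<lambda>c. (sY1 c, sY2 c, sS2 c)) (snd w))) msg_traj)
   \<ge> (\<Sum>k<n. measure_pmf.expectation (letter_law k) (\<lambda>c. residual_state_ent PS W (sA c) (sX c) (sY1 c) (sY2 c) (sS2 c)))"
proof -
  let ?B = "\<lambda>w. (fst w, map (\<lambda>c. (sY1 c, sY2 c, sS2 c)) (snd w))"
  have "ent (map_pmf (\<lambda>w. (map sS1 (snd w), ?B w)) msg_traj) - ent (map_pmf ?B msg_traj)
      = (\<Sum>k<n. ent (map_pmf (\<lambda>w. (sS1 (snd w ! k), (take k (map sS1 (snd w)), ?B w))) msg_traj)
               - ent (map_pmf (\<lambda>w. (take k (map sS1 (snd w)), ?B w)) msg_traj))"
    by (rule ent_chain_rule_list[OF finite_msg_traj length_msg_traj])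
  also have "\<dots> \<ge> (\<Sum>k<n. measure_pmf.expectation (letter_law k)
                    (\<lambda>c. residual_state_ent PS W (sA c) (sX c) (sY1 c) (sY2 c) (sS2 c)))"
    by (intro sum_mono cond_ent_state_ge) simp
  finally show ?thesis .
qed

text \<open>With Z = (Y2^n, S2^n) and L = (Y1^n, S1^n), H(M|Z) = H(M|L Z) + H(L|Z) - H(L|M Z): the first
  term is bounded by Fano, the second letter by letter, and the third from below by the residual
  uncertainty about each S1_i given (A_i, X_i, Y1_i, Y2_i, S2_i).\<close>
lemma msg_ent_le_secrecy:
  "ent (map_pmf fst msg_traj)
   \<le> (ent (map_pmf fst msg_traj) + ent (map_pmf (\<lambda>w. (map sY2 (snd w), map sS2 (snd w))) msg_traj)
        - ent (map_pmf (\<lambda>w. (fst w, (map sY2 (snd w), map sS2 (snd w)))) msg_traj))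
     + ent (map_pmf decoding_error msg_traj) + measure_pmf.prob msg_traj {w. decoding_error w} * log 2 (real K)
     + (\<Sum>k<n. secrecy_bound PS W (letter_law k))"
proof -
  let ?F1 = "\<lambda>c. (sY1 c, sS1 c)" and ?F2 = "\<lambda>c. (sY2 c, sS2 c)" and ?yy = "\<lambda>c. (sY1 c, sY2 c, sS2 c)"
  let ?L1 = "\<lambda>w. map ?F1 (snd w)" and ?L2 = "\<lambda>w. map ?F2 (snd w)"
  let ?Z2 = "\<lambda>w. (map sY2 (snd w), map sS2 (snd w))" and ?B = "\<lambda>w. (fst w, map ?yy (snd w))"
  have "ent (map_pmf (\<lambda>w. (fst w, ?Z2 w)) msg_traj) = ent (map_pmf (\<lambda>w. (fst w, ?L2 w)) msg_traj)"
    by (rule ent_map_eq_of_functions[OF finite_msg_traj, where \<phi>="\<lambda>(m, l). (m, (map fst l, map snd l))"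
          and \<psi>="\<lambda>(m, a, b). (m, zip a b)"]) (auto simp: zip_map_map)
  moreover have "ent (map_pmf ?Z2 msg_traj) = ent (map_pmf ?L2 msg_traj)"
    by (rule ent_map_eq_of_functions[OF finite_msg_traj, where \<phi>="\<lambda>l. (map fst l, map snd l)"
          and \<psi>="\<lambda>(a, b). zip a b"]) (auto simp: zip_map_map)
  moreover have "ent (map_pmf (\<lambda>w. (fst w, (?L1 w, ?L2 w))) msg_traj) - ent (map_pmf (\<lambda>w. (?L1 w, ?L2 w)) msg_traj)
      \<le> ent (map_pmf (\<lambda>w. (fst w, ?L1 w)) msg_traj) - ent (map_pmf ?L1 msg_traj)"
    by (rule cond_ent_le_of_function[OF finite_msg_traj, where \<psi>=fst]) simp
  moreover have "ent (map_pmf (\<lambda>w. (map sS1 (snd w), ?B w)) msg_traj) = ent (map_pmf (\<lambda>w. (fst w, (?L1 w, ?L2 w))) msg_traj)"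
    by (rule ent_map_eq_of_functions[OF finite_msg_traj,
          where \<phi>="\<lambda>(m, l1, l2). (map snd l1, (m, zip (map fst l1) (zip (map fst l2) (map snd l2))))"
          and \<psi>="\<lambda>(s1s, m, yys). (m, zip (map fst yys) s1s, zip (map (fst \<circ> snd) yys) (map (snd \<circ> snd) yys))"])
       (auto simp: zip_map_map o_def)
  moreover have "ent (map_pmf (\<lambda>w. (fst w, ?L2 w)) msg_traj) \<le> ent (map_pmf ?B msg_traj)"
    by (rule ent_map_le_of_function[OF finite_msg_traj,
          where \<phi>="\<lambda>(m, yys). (m, zip (map (fst \<circ> snd) yys) (map (snd \<circ> snd) yys))"])
       (auto simp: zip_map_map o_def)
  moreover have "ent (map_pmf (\<lambda>w. (fst w, (?L1 w, ?L2 w))) msg_traj) = ent (map_pmf (\<lambda>w. (?L1 w, (fst w, ?L2 w))) msg_traj)"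
    by (rule ent_map_eq_of_functions[OF finite_msg_traj, where \<phi>="\<lambda>(a, b, c). (b, a, c)" and \<psi>="\<lambda>(a, b, c). (b, a, c)"]) auto
  moreover have "(\<Sum>k<n. secrecy_bound PS W (letter_law k))
      = (\<Sum>k<n. ent (map_pmf (\<lambda>c. (?F1 c, ?F2 c)) (letter_law k)) - ent (map_pmf ?F2 (letter_law k)))
        - (\<Sum>k<n. measure_pmf.expectation (letter_law k) (\<lambda>c. residual_state_ent PS W (sA c) (sX c) (sY1 c) (sY2 c) (sS2 c)))"
    unfolding secrecy_bound_def by (simp add: sum_subtractf)
  ultimately show ?thesis
    using cond_ent_obs_le_sum_letters cond_ent_states_ge_sum_letters fano_msg_traj by linarith
qed

lemma expectation_letter_bayes_risk_le:
  fixes G :: "'s1 \<times> 's2 \<Rightarrow> 's::finite" and d :: "'s \<Rightarrow> 'e::finite \<Rightarrow> real"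
    and est :: "'x list \<Rightarrow> 'a list \<Rightarrow> 'y1 list \<Rightarrow> 'y2 list \<Rightarrow> 'e"
  assumes i: "i < n"
  shows "measure_pmf.expectation (joint1 PS W (letter_input i)) (letter_bayes_risk PS W G d)
     \<le> measure_pmf.expectation msg_traj (\<lambda>w. d (G (sS1 (snd w ! i), sS2 (snd w ! i))) (est (map sX (snd w)) (map sA (snd w)) (map sY1 (snd w)) (map sY2 (snd w))))"
proof -
  let ?Q = "msg_traj"
  let ?D = "map_pmf (\<lambda>w. ((map sX (snd w), map sA (snd w), map sY1 (snd w), map sY2 (snd w)), G (sS1 (snd w ! i), sS2 (snd w ! i)))) ?Q"
  let ?k = "\<lambda>(xs, as, y1s, y2s). map_pmf G (posterior (channel_law PS W (as ! i) (xs ! i)) (y1s ! i, y2s ! i))"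
  have kf: "has_cond_distr ?D ?k" by (rule has_cond_distr_msg_traj_estimate[OF i])
  have finQ: "finite (set_pmf ?Q)" by (rule finite_msg_traj)
  have "measure_pmf.expectation (map_pmf fst ?D) (\<lambda>v. bayes_risk (?k v) d)
     \<le> measure_pmf.expectation ?D (\<lambda>(v, s). d s ((\<lambda>(xs, as, y1s, y2s). est xs as y1s y2s) v))"
    by (rule expectation_ge_bayes_risk[OF kf]) (simp add: finQ)
  also have "\<dots> = measure_pmf.expectation ?Q (\<lambda>w. d (G (sS1 (snd w ! i), sS2 (snd w ! i))) (est (map sX (snd w)) (map sA (snd w)) (map sY1 (snd w)) (map sY2 (snd w))))"
    by simp
  finally have a: "measure_pmf.expectation (map_pmf fst ?D) (\<lambda>v. bayes_risk (?k v) d) \<le> \<dots>" .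
  have "measure_pmf.expectation (map_pmf fst ?D) (\<lambda>v. bayes_risk (?k v) d)
      = measure_pmf.expectation ?Q (\<lambda>w. bayes_risk (?k (map sX (snd w), map sA (snd w), map sY1 (snd w), map sY2 (snd w))) d)"
    by (simp add: map_pmf_comp)
  also have "\<dots> = measure_pmf.expectation ?Q (\<lambda>w. letter_bayes_risk PS W G d (snd w ! i))"
  proof -
    have "(\<Sum>w\<in>set_pmf ?Q. pmf ?Q w * bayes_risk (?k (map sX (snd w), map sA (snd w), map sY1 (snd w), map sY2 (snd w))) d)
        = (\<Sum>w\<in>set_pmf ?Q. pmf ?Q w * letter_bayes_risk PS W G d (snd w ! i))"
    proof (intro sum.cong refl)
      fix w assume w: "w \<in> set_pmf ?Q"
      have "length (snd w) = n" using length_msg_traj[OF w] .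
      then show "pmf ?Q w * bayes_risk (?k (map sX (snd w), map sA (snd w), map sY1 (snd w), map sY2 (snd w))) d
          = pmf ?Q w * letter_bayes_risk PS W G d (snd w ! i)"
        using i by (simp add: letter_bayes_risk_def)
    qed
    then show ?thesis by (simp add: expectation_finite_support[OF finQ])
  qed
  also have "\<dots> = measure_pmf.expectation (joint1 PS W (letter_input i)) (letter_bayes_risk PS W G d)"
    by (rule expectation_nth_msg_traj[OF i])
  finally show ?thesis using a by simp
qed

context
  assumes n: "n > 0"
begin

lemma map_pmf_fst_msg_traj: "map_pmf fst (msg_traj) = pmf_of_set {..<K}"
  unfolding msg_traj_def code_dist_bind by (simp add: map_bind_pmf map_pmf_comp bind_return_pmf')

lemma error_prob_eq: "error_prob = measure_pmf.prob (msg_traj) {w. dec (map sY1 (snd w)) (map sS1 (snd w)) \<noteq> fst w}"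
  unfolding msg_traj_def code_dist_bind by (simp add: vimage_def case_prod_unfold)

lemma leakage_eq: "minf (map_pmf (\<lambda>(m, tk, h). (m, (map sY2 h, map sS2 h))) (code_dist PS W n K PT f g))
  = ent (map_pmf fst (msg_traj)) + ent (map_pmf (\<lambda>w. (map sY2 (snd w), map sS2 (snd w))) (msg_traj))
        - ent (map_pmf (\<lambda>w. (fst w, (map sY2 (snd w), map sS2 (snd w)))) (msg_traj))"
  unfolding minf_def msg_traj_def code_dist_bind by (simp add: map_pmf_comp case_prod_unfold)

lemma sum_letters_le_time_sharing:
  fixes G :: "('a,'x,'s1,'s2,'y1,'y2) sym pmf \<Rightarrow> real"
  assumes mix: "\<And>J :: nat \<Rightarrow> ('a,'x,'s1,'s2,'y1,'y2) sym pmf. measure_pmf.expectation (pmf_of_set {..<n}) (\<lambda>i. G (J i)) \<le> G (bind_pmf (pmf_of_set {..<n}) J)"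
  shows "(\<Sum>k<n. G (letter_law k)) \<le> real n * G (joint1 PS W time_shared_input)"
proof -
  have "(\<Sum>k<n. G (letter_law k)) = real n * measure_pmf.expectation (pmf_of_set {..<n}) (\<lambda>k. G (letter_law k))"
    using n by (simp add: expectation_uniform)
  also have "\<dots> \<le> real n * G (bind_pmf (pmf_of_set {..<n}) (\<lambda>k. joint1 PS W (letter_input k)))"
    by (intro mult_left_mono mix) simp
  also have "bind_pmf (pmf_of_set {..<n}) (\<lambda>k. joint1 PS W (letter_input k)) = joint1 PS W time_shared_input"
    by (simp add: joint1_bind_pmf time_shared_input_def)
  finally show ?thesis .
qed

lemma log_card_le_secrecy:
  "log 2 (real K) \<le> minf (map_pmf (\<lambda>(m, tk, h). (m, (map sY2 h, map sS2 h))) (code_dist PS W n K PT f g)) + binary_entropy error_prob + error_prob * log 2 (real K)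
     + real n * secrecy_bound PS W (joint1 PS W time_shared_input)"
proof -
  have "ent (map_pmf fst (msg_traj)) \<le> (ent (map_pmf fst (msg_traj)) + ent (map_pmf (\<lambda>w. (map sY2 (snd w), map sS2 (snd w))) (msg_traj))
        - ent (map_pmf (\<lambda>w. (fst w, (map sY2 (snd w), map sS2 (snd w)))) (msg_traj)))
     + ent (map_pmf (decoding_error) (msg_traj))
     + measure_pmf.prob (msg_traj) {w. dec (map sY1 (snd w)) (map sS1 (snd w)) \<noteq> fst w} * log 2 (real K)
     + (\<Sum>k<n. secrecy_bound PS W (letter_law k))"
    by (rule msg_ent_le_secrecy)
  moreover have "(\<Sum>k<n. secrecy_bound PS W (letter_law k)) \<le> real n * secrecy_bound PS W (joint1 PS W time_shared_input)"
    by (rule sum_letters_le_time_sharing) (rule secrecy_bound_mixture, use n in \<open>simp add: set_pmf_of_set lessThan_empty_iff\<close>)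
  ultimately show ?thesis
    unfolding leakage_eq error_prob_eq ent_bool map_pmf_fst_msg_traj ent_uniform[OF K] by linarith
qed

lemma log_card_le_reliability:
  "log 2 (real K) \<le> binary_entropy error_prob + error_prob * log 2 (real K) + real n * reliability_bound PS W (joint1 PS W time_shared_input)"
proof -
  have "ent (map_pmf fst (msg_traj)) \<le> ent (map_pmf (decoding_error) (msg_traj))
     + measure_pmf.prob (msg_traj) {w. dec (map sY1 (snd w)) (map sS1 (snd w)) \<noteq> fst w} * log 2 (real K)
     + (\<Sum>k<n. reliability_bound PS W (letter_law k))"
    by (rule msg_ent_le_reliability)
  moreover have "(\<Sum>k<n. reliability_bound PS W (letter_law k)) \<le> real n * reliability_bound PS W (joint1 PS W time_shared_input)"
    by (rule sum_letters_le_time_sharing) (rule reliability_bound_mixture, use n in \<open>simp add: set_pmf_of_set lessThan_empty_iff\<close>)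
  ultimately show ?thesis
    unfolding error_prob_eq ent_bool map_pmf_fst_msg_traj ent_uniform[OF K] by linarith
qed

lemma time_sharing_bayes_risk_le:
  fixes G :: "'s1 \<times> 's2 \<Rightarrow> 's::finite" and d :: "'s \<Rightarrow> 'e::finite \<Rightarrow> real"
    and est :: "nat \<Rightarrow> 'x list \<Rightarrow> 'a list \<Rightarrow> 'y1 list \<Rightarrow> 'y2 list \<Rightarrow> 'e"
  shows "measure_pmf.expectation (joint1 PS W time_shared_input) (letter_bayes_risk PS W G d)
    \<le> measure_pmf.expectation (code_dist PS W n K PT f g) (\<lambda>(m, tk, h). seq_dist n d (\<lambda>i. G (sS1 (h ! i), sS2 (h ! i)))
          (\<lambda>i. est i (map sX h) (map sA h) (map sY1 h) (map sY2 h)))"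
proof -
  let ?Q = "msg_traj"
  let ?t = "\<lambda>i w. d (G (sS1 (snd w ! i), sS2 (snd w ! i))) (est i (map sX (snd w)) (map sA (snd w)) (map sY1 (snd w)) (map sY2 (snd w)))"
  have finQ: "finite (set_pmf ?Q)" by (rule finite_msg_traj)
  have finU: "finite (set_pmf (pmf_of_set {..<n}))" using n by (simp add: set_pmf_of_set lessThan_empty_iff)
  have "measure_pmf.expectation (code_dist PS W n K PT f g) (\<lambda>(m, tk, h). seq_dist n d (\<lambda>i. G (sS1 (h ! i), sS2 (h ! i)))
          (\<lambda>i. est i (map sX h) (map sA h) (map sY1 h) (map sY2 h)))
      = measure_pmf.expectation ?Q (\<lambda>w. (1 / real n) * (\<Sum>i<n. ?t i w))"
    unfolding msg_traj_def code_dist_bind by (simp add: seq_dist_def case_prod_unfold)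
  also have "\<dots> = (1 / real n) * (\<Sum>i<n. measure_pmf.expectation ?Q (?t i))"
    by (simp add: expectation_finite_support[OF finQ] sum_distrib_left sum.swap[of _ "set_pmf ?Q"] mult.left_commute)
  finally have e1: "measure_pmf.expectation (code_dist PS W n K PT f g) (\<lambda>(m, tk, h). seq_dist n d (\<lambda>i. G (sS1 (h ! i), sS2 (h ! i)))
          (\<lambda>i. est i (map sX h) (map sA h) (map sY1 h) (map sY2 h))) = (1 / real n) * (\<Sum>i<n. measure_pmf.expectation ?Q (?t i))" .
  have "measure_pmf.expectation (joint1 PS W time_shared_input) (letter_bayes_risk PS W G d)
      = measure_pmf.expectation (pmf_of_set {..<n}) (\<lambda>i. measure_pmf.expectation (joint1 PS W (letter_input i)) (letter_bayes_risk PS W G d))"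
    unfolding time_shared_input_def joint1_bind_pmf by (rule expectation_bind_pmf_finite[OF finU])
  also have "\<dots> = (\<Sum>i<n. measure_pmf.expectation (joint1 PS W (letter_input i)) (letter_bayes_risk PS W G d)) / real n"
    by (rule expectation_uniform[OF n])
  also have "\<dots> \<le> (\<Sum>i<n. measure_pmf.expectation ?Q (?t i)) / real n"
    by (intro divide_right_mono sum_mono expectation_letter_bayes_risk_le) auto
  finally show ?thesis using e1 by simp
qed

end

end

end

lemma scaled_rate_le:
  fixes L n c G :: real
  assumes "R - \<delta> \<le> L / n" and "\<delta> \<le> 1" and "1 \<le> n" and "(1 - \<delta>) * L \<le> c + n * G"
  shows "(1 - \<delta>) * (R - \<delta>) \<le> max c 0 + G"
proof -
  have "(1 - \<delta>) * (R - \<delta>) \<le> (1 - \<delta>) * (L / n)"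
    using assms(1,2) by (intro mult_left_mono) auto
  also have "\<dots> \<le> (c + n * G) / n"
    using assms(3,4) by (simp add: divide_right_mono)
  also have "\<dots> = c / n + G"
    using assms(3) by (simp add: add_divide_distrib)
  also have "c / n \<le> max c 0"
    using assms(3) by (cases "c \<ge> 0") (auto simp: divide_le_eq divide_nonpos_pos mult_le_cancel_left1)
  finally show ?thesis
    by simp
qed

text \<open>The single-letter bounds as they come out of one code with slack \<epsilon>: p stands for the
  error probability, which enters through the Fano term binary_entropy p, and the leakage
  contributes the extra \<epsilon> to the secrecy bound. For \<epsilon> = p = 0 these are the bounds of the theorem.\<close>
definition approx_single_letter ::
  "('a \<Rightarrow> ('s1::finite \<times> 's2::finite) pmf) \<Rightarrow> ('s1 \<Rightarrow> 's2 \<Rightarrow> 'x \<Rightarrow> ('y1 \<times> 'y2) pmf)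
   \<Rightarrow> ('s1 \<Rightarrow> 'e1::finite \<Rightarrow> real) \<Rightarrow> ('s2 \<Rightarrow> 'e2::finite \<Rightarrow> real)
   \<Rightarrow> real \<Rightarrow> real \<times> real \<times> real \<Rightarrow> ('a \<times> 'x) pmf \<Rightarrow> real \<Rightarrow> bool" where
  "approx_single_letter PS W d1 d2 \<epsilon> RD P p \<longleftrightarrow> (case RD of (R, D1, D2) \<Rightarrow>
     0 \<le> p \<and> p \<le> \<epsilon>
     \<and> (1 - \<epsilon>) * (R - \<epsilon>) \<le> max (\<epsilon> + binary_entropy p) 0 + secrecy_bound PS W (joint1 PS W P)
     \<and> (1 - \<epsilon>) * (R - \<epsilon>) \<le> max (binary_entropy p) 0 + reliability_bound PS W (joint1 PS W P)
     \<and> measure_pmf.expectation (joint1 PS W P) (letter_bayes_risk PS W fst d1) \<le> D1 + \<epsilon>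
     \<and> measure_pmf.expectation (joint1 PS W P) (letter_bayes_risk PS W snd d2) \<le> D2 + \<epsilon>)"

lemma approx_single_letter_of_achievable:
  fixes PS :: "'a::finite \<Rightarrow> ('s1::finite \<times> 's2::finite) pmf"
    and W :: "'s1 \<Rightarrow> 's2 \<Rightarrow> 'x::finite \<Rightarrow> ('y1::finite \<times> 'y2::finite) pmf"
    and d1 :: "'s1 \<Rightarrow> 'e1::finite \<Rightarrow> real"
    and d2 :: "'s2 \<Rightarrow> 'e2::finite \<Rightarrow> real"
  assumes ach: "achievable PS W d1 d2 RD" and \<delta>: "0 < \<delta>" "\<delta> \<le> 1"
  shows "\<exists>P p. approx_single_letter PS W d1 d2 \<delta> RD P p"
proof -
  obtain R D1 D2 where RD: "RD = (R, D1, D2)"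
    by (cases RD) auto
  obtain n K PT f g dec est1 est2 where
      n1: "n \<ge> 1" and K1: "K \<ge> 1"
    and rate: "log 2 (real K) / real n \<ge> R - \<delta>"
    and err: "measure_pmf.prob (code_dist PS W n K PT f g) {(m, tk, h). dec (map sY1 h) (map sS1 h) \<noteq> m} \<le> \<delta>"
    and sec: "minf (map_pmf (\<lambda>(m, tk, h). (m, (map sY2 h, map sS2 h))) (code_dist PS W n K PT f g)) \<le> \<delta>"
    and dist1: "measure_pmf.expectation (code_dist PS W n K PT f g) (\<lambda>(m, tk, h). seq_dist n d1 (\<lambda>i. sS1 (h ! i))
            (\<lambda>i. est1 i (map sX h) (map sA h) (map sY1 h) (map sY2 h))) \<le> D1 + \<delta>"
    and dist2: "measure_pmf.expectation (code_dist PS W n K PT f g) (\<lambda>(m, tk, h). seq_dist n d2 (\<lambda>i. sS2 (h ! i))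
            (\<lambda>i. est2 i (map sX h) (map sA h) (map sY1 h) (map sY2 h))) \<le> D2 + \<delta>"
    using ach \<delta> unfolding achievable_def Let_def RD by fastforce
  have K: "K > 0" and n: "n > 0"
    using n1 K1 by auto
  define p where "p = measure_pmf.prob (code_dist PS W n K PT f g) {(m, tk, h). dec (map sY1 h) (map sS1 h) \<noteq> m}"
  define P where "P = time_shared_input PS W f g K PT n"
  have pL: "p * log 2 (real K) \<le> \<delta> * log 2 (real K)"
    using err K1 unfolding p_def by (intro mult_right_mono) auto
  have distrib: "(1 - \<delta>) * log 2 (real K) = log 2 (real K) - \<delta> * log 2 (real K)"
    by (simp add: algebra_simps)
  have n1': "1 \<le> real n"
    using n1 by simp
  have "(1 - \<delta>) * (R - \<delta>) \<le> max (\<delta> + binary_entropy p) 0 + secrecy_bound PS W (joint1 PS W P)"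
    using log_card_le_secrecy[OF K n, where PS=PS and W=W and f=f and g=g and PT=PT and dec=dec] sec pL distrib
    unfolding p_def P_def by (intro scaled_rate_le[OF rate \<delta>(2) n1']) linarith
  moreover have "(1 - \<delta>) * (R - \<delta>) \<le> max (binary_entropy p) 0 + reliability_bound PS W (joint1 PS W P)"
    using log_card_le_reliability[OF K n, where PS=PS and W=W and f=f and g=g and PT=PT and dec=dec] pL distrib
    unfolding p_def P_def by (intro scaled_rate_le[OF rate \<delta>(2) n1']) linarith
  moreover have "measure_pmf.expectation (joint1 PS W P) (letter_bayes_risk PS W fst d1) \<le> D1 + \<delta>"
    and "measure_pmf.expectation (joint1 PS W P) (letter_bayes_risk PS W snd d2) \<le> D2 + \<delta>"
    using time_sharing_bayes_risk_le[OF K n, where PS=PS and W=W and f=f and g=g and PT=PT and G=fst and d=d1 and est=est1]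
      time_sharing_bayes_risk_le[OF K n, where PS=PS and W=W and f=f and g=g and PT=PT and G=snd and d=d2 and est=est2]
      dist1 dist2
    unfolding P_def by simp_all
  moreover have "0 \<le> p" "p \<le> \<delta>"
    using err unfolding p_def by simp_all
  ultimately show ?thesis
    unfolding approx_single_letter_def RD by blast
qed

lemma binary_entropy_0 [simp]: "binary_entropy 0 = 0"
  by (simp add: binary_entropy_def)

lemma approx_single_letter_closed:
  fixes PS :: "'a::finite \<Rightarrow> ('s1::finite \<times> 's2::finite) pmf"
    and W :: "'s1 \<Rightarrow> 's2 \<Rightarrow> 'x::finite \<Rightarrow> ('y1::finite \<times> 'y2::finite) pmf"
  assumes approx: "\<And>N. approx_single_letter PS W d1 d2 (\<epsilon> N) (X N) (P N) (p N)"
    and \<epsilon>: "\<epsilon> \<longlonglongrightarrow> 0" "\<And>N. \<epsilon> N \<le> 1" and X: "X \<longlonglongrightarrow> (R, D1, D2)"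
    and P: "\<And>ax. (\<lambda>N. pmf (P N) ax) \<longlonglongrightarrow> pmf Q ax"
  shows "approx_single_letter PS W d1 d2 0 (R, D1, D2) Q 0"
proof -
  let ?J = "\<lambda>N. joint1 PS W (P N)"
  have A: "0 \<le> p N \<and> p N \<le> \<epsilon> N
    \<and> (1 - \<epsilon> N) * (fst (X N) - \<epsilon> N) \<le> max (\<epsilon> N + binary_entropy (p N)) 0 + secrecy_bound PS W (?J N)
    \<and> (1 - \<epsilon> N) * (fst (X N) - \<epsilon> N) \<le> max (binary_entropy (p N)) 0 + reliability_bound PS W (?J N)
    \<and> measure_pmf.expectation (?J N) (letter_bayes_risk PS W fst d1) \<le> fst (snd (X N)) + \<epsilon> N
    \<and> measure_pmf.expectation (?J N) (letter_bayes_risk PS W snd d2) \<le> snd (snd (X N)) + \<epsilon> N" for N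
    using approx[of N] by (simp add: approx_single_letter_def split_beta)
  have "p \<longlonglongrightarrow> 0"
    using A by (intro tendsto_sandwich[OF _ _ tendsto_const \<epsilon>(1)]) auto
  then have h: "(\<lambda>N. binary_entropy (p N)) \<longlonglongrightarrow> 0"
    using A \<epsilon>(2) by (intro tendsto_binary_entropy_0) (auto intro: order_trans)
  have R: "(\<lambda>N. fst (X N)) \<longlonglongrightarrow> R" and D1: "(\<lambda>N. fst (snd (X N))) \<longlonglongrightarrow> D1"
    and D2: "(\<lambda>N. snd (snd (X N))) \<longlonglongrightarrow> D2"
    using tendsto_fst[OF X] tendsto_fst[OF tendsto_snd[OF X]] tendsto_snd[OF tendsto_snd[OF X]] by simp_all
  have lhs: "(\<lambda>N. (1 - \<epsilon> N) * (fst (X N) - \<epsilon> N)) \<longlonglongrightarrow> (1 - 0) * (R - 0)"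
    by (intro tendsto_intros \<epsilon>(1) R)
  have "(\<lambda>N. max (\<epsilon> N + binary_entropy (p N)) 0 + secrecy_bound PS W (?J N))
      \<longlonglongrightarrow> max (0 + 0) 0 + secrecy_bound PS W (joint1 PS W Q)"
    by (intro tendsto_add tendsto_max \<epsilon>(1) h tendsto_const tendsto_secrecy_bound[OF P])
  then have "(1 - 0) * (R - 0) \<le> max (0 + 0) 0 + secrecy_bound PS W (joint1 PS W Q)"
    using A by (intro LIMSEQ_le[OF lhs]) auto
  moreover have "(\<lambda>N. max (binary_entropy (p N)) 0 + reliability_bound PS W (?J N))
      \<longlonglongrightarrow> max 0 0 + reliability_bound PS W (joint1 PS W Q)"
    by (intro tendsto_add tendsto_max h tendsto_const tendsto_reliability_bound[OF P])
  then have "(1 - 0) * (R - 0) \<le> max 0 0 + reliability_bound PS W (joint1 PS W Q)"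
    using A by (intro LIMSEQ_le[OF lhs]) auto
  moreover have "measure_pmf.expectation (joint1 PS W Q) (letter_bayes_risk PS W fst d1) \<le> D1 + 0"
    using A by (intro LIMSEQ_le[OF tendsto_expectation_joint1[OF P] tendsto_add[OF D1 \<epsilon>(1)]]) auto
  moreover have "measure_pmf.expectation (joint1 PS W Q) (letter_bayes_risk PS W snd d2) \<le> D2 + 0"
    using A by (intro LIMSEQ_le[OF tendsto_expectation_joint1[OF P] tendsto_add[OF D2 \<epsilon>(1)]]) auto
  ultimately show ?thesis
    by (simp add: approx_single_letter_def)
qed

lemma approx_single_letter_limit:
  fixes PS :: "'a::finite \<Rightarrow> ('s1::finite \<times> 's2::finite) pmf"
    and W :: "'s1 \<Rightarrow> 's2 \<Rightarrow> 'x::finite \<Rightarrow> ('y1::finite \<times> 'y2::finite) pmf"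
  assumes approx: "\<And>N. approx_single_letter PS W d1 d2 (\<epsilon> N) (X N) (P N) (p N)"
    and \<epsilon>: "\<epsilon> \<longlonglongrightarrow> 0" "\<And>N. \<epsilon> N \<le> 1" and X: "X \<longlonglongrightarrow> (R, D1, D2)"
  shows "\<exists>Q. approx_single_letter PS W d1 d2 0 (R, D1, D2) Q 0"
proof -
  obtain r Q where r: "strict_mono r" and P: "\<And>ax. (\<lambda>N. pmf (P (r N)) ax) \<longlonglongrightarrow> pmf Q ax"
    using pmf_convergent_subseq[of P] by blast
  have sub: "(\<lambda>N. u (r N)) \<longlonglongrightarrow> l" if "u \<longlonglongrightarrow> l" for u :: "nat \<Rightarrow> 'z::topological_space" and l
    using LIMSEQ_subseq_LIMSEQ[OF that r] by (simp add: o_def)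
  show ?thesis
    by (rule exI, rule approx_single_letter_closed[OF approx sub[OF \<epsilon>(1)] \<epsilon>(2) sub[OF X] P])
qed

theorem mainTheorem7:
  fixes PS :: "'a::finite \<Rightarrow> ('s1::finite \<times> 's2::finite) pmf"
    and W :: "'s1 \<Rightarrow> 's2 \<Rightarrow> 'x::finite \<Rightarrow> ('y1::finite \<times> 'y2::finite) pmf"
    and d1 :: "'s1 \<Rightarrow> 'e1::finite \<Rightarrow> real"
    and d2 :: "'s2 \<Rightarrow> 'e2::finite \<Rightarrow> real"
    and R D1 D2 :: real
  assumes "\<forall>s e. 0 \<le> d1 s e" and "\<forall>s e. 0 \<le> d2 s e"
    and "(R, D1, D2) \<in> R_Act PS W d1 d2"
  shows "\<exists>P :: ('a \<times> 'x) pmf. let J = joint1 PS W P in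
     R \<le> cent (map_pmf (\<lambda>c. ((sY1 c, sS1 c), (sY2 c, sS2 c))) J)
          - cent (map_pmf (\<lambda>c. (sS1 c, (sY1 c, sY2 c, sS2 c, sX c, sA c))) J) \<and>
     R \<le> minf (map_pmf (\<lambda>c. ((sX c, sA c), (sY1 c, sS1 c))) J) \<and>
     (\<forall>e1. bayes_est (map_pmf (\<lambda>c. ((sA c, sX c, sY1 c, sY2 c), sS1 c)) J) d1 e1 \<longrightarrow>
        D1 \<ge> measure_pmf.expectation J (\<lambda>c. d1 (sS1 c) (e1 (sA c, sX c, sY1 c, sY2 c)))) \<and>
     (\<forall>e2. bayes_est (map_pmf (\<lambda>c. ((sA c, sX c, sY1 c, sY2 c), sS2 c)) J) d2 e2 \<longrightarrow>
        D2 \<ge> measure_pmf.expectation J (\<lambda>c. d2 (sS2 c) (e2 (sA c, sX c, sY1 c, sY2 c))))"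
proof -
  obtain X where X: "\<And>N. achievable PS W d1 d2 (X N)" and lim: "X \<longlonglongrightarrow> (R, D1, D2)"
    using assms(3) unfolding R_Act_def closure_sequential by auto
  define \<epsilon> where "\<epsilon> N = 1 / (real N + 2)" for N
  have \<epsilon>: "0 < \<epsilon> N" "\<epsilon> N \<le> 1" for N
    unfolding \<epsilon>_def by auto
  have "\<exists>P p. approx_single_letter PS W d1 d2 (\<epsilon> N) (X N) P p" for N
    by (rule approx_single_letter_of_achievable[OF X \<epsilon>])
  then obtain P p where "\<And>N. approx_single_letter PS W d1 d2 (\<epsilon> N) (X N) (P N) (p N)"
    by metis
  moreover have "\<epsilon> \<longlonglongrightarrow> 0"
    unfolding \<epsilon>_def by real_asymp
  ultimately obtain Q where "approx_single_letter PS W d1 d2 0 (R, D1, D2) Q 0"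
    using approx_single_letter_limit \<epsilon>(2) lim by blast
  then have "R \<le> secrecy_bound PS W (joint1 PS W Q)" "R \<le> reliability_bound PS W (joint1 PS W Q)"
    "measure_pmf.expectation (joint1 PS W Q) (letter_bayes_risk PS W fst d1) \<le> D1"
    "measure_pmf.expectation (joint1 PS W Q) (letter_bayes_risk PS W snd d2) \<le> D2"
    by (simp_all add: approx_single_letter_def)
  then show ?thesis
    using expectation_bayes_est_joint1[where G=fst and d=d1 and PS=PS and W=W and P=Q, simplified]
      expectation_bayes_est_joint1[where G=snd and d=d2 and PS=PS and W=W and P=Q, simplified]
    by (auto simp: Let_def secrecy_bound_eq reliability_bound_eq)
qed

end
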